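(* Let $\beta>0$ and feasible $\lambda$ be fixed. Suppose $0<\xi<a/2$ and $\rho\in\mathcal{P}$. If $d_0>\tau(\beta)a$, where $\tau(\beta)=\frac{\beta+2}{\beta+1}$ for $0<\beta<1$ and $\tau(\beta)=\frac32$ for $\beta\ge1$, then $\lim_{\delta\to0^+}E_\xi(\delta)=0$.
   Context: Fix $a>0$. For $0<\delta<1$ and constants $\beta>0$, $\lambda\in\mathbb{R}$, put $\mu=\delta+\lambda\delta^{\beta}$. The constant $\lambda$ is feasible if $\lambda>0$ when $0<\beta<1$, $\lambda\ge-1$ when $\beta=1$, $\lambda\ne0$ when $\beta>1$; then $\delta_\mu\in(0,1)$ denotes a number with $\mu\ge0$ for $0<\delta\le\delta_\mu$ (all $\delta$ considered satisfy $0<\delta\le\delta_\mu$). The dielectric constant is $\varepsilon_c=1+\mathrm{i}\mu$ for $x<0$, $\varepsilon_s=-1+\mathrm{i}\delta$ for $0\le x\le a$, $\varepsilon_m=1$ for $x>a$. Let $\mathcal{M}=\{(x,y)\in\mathbb{R}^2:x>a\}$. $\mathcal{P}$ is the set of real-valued $\rho\in L^2(\mathcal{M})\cap L^\infty(\mathcal{M})$ with compact support in $\mathcal{M}$, with $0<|\operatorname{supp}\rho|<\infty$ and $\int\!\!\int\rho\,\mathrm{d}y\,\mathrm{d}x=0$; $\rho$ is extended by $0$ to $\mathbb{R}^2$. Put $d_0=\min\{x:(x,y)\in\operatorname{supp}\rho\}$, $d_1=\max\{x:(x,y)\in\operatorname{supp}\rho\}$. The Fourier transform in $y$ is $\widehat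 f(x,k)=\int_{-\infty}^{\infty}f(x,y)\mathrm{e}^{-\mathrm{i}ky}\,\mathrm{d}y$, and $I_k=\int_{d_0}^{d_1}\widehat\rho(s,k)\mathrm{e}^{-|k|s}\,\mathrm{d}s$. The potential $V$: let $\chi_c=\varepsilon_s/\varepsilon_c$, $\psi_k^+=\frac{1}{2\chi_c}[(\chi_c+1)\mathrm{e}^{|k|a}+(\chi_c-1)\mathrm{e}^{-|k|a}]$, $\psi_k^-=\frac{|k|\varepsilon_s}{2\chi_c}[(\chi_c+1)\mathrm{e}^{|k|a}-(\chi_c-1)\mathrm{e}^{-|k|a}]$, $A_k=I_k/(\mathrm{e}^{-|k|a}(|k|\psi_k^++\psi_k^-))$. For $k\ne0$ set $\widehat V(x,k)=A_k\mathrm{e}^{|k|x}$ for $x<0$; $\widehat V(x,k)=\frac{A_k}{2\chi_c}[(\chi_c+1)\mathrm{e}^{|k|x}+(\chi_c-1)\mathrm{e}^{-|k|x}]$ for $0\le x\le a$; $\widehat V(x,k)=A_k\psi_k^+\cosh(|k|(x-a))+\frac{A_k\psi_k^-}{|k|}\sinh(|k|(x-a))+\frac1{|k|}\int_a^x\sinh(|k|(x'-x))\widehat\rho(x',k)\,\mathrm{d}x'$ for $x>a$. $V(x,\cdot)$ is the function whose $y$-Fourier transform is $\widehat V(x,\cdot)$; it is the (up to an additive constant unique) solution of $-\nabla\cdot(\varepsilon\nabla V)=\rho$ in $\mathbb{R}^2$ with $V$ and $\varepsilon\,\partial_xV$ continuous across $x=0,a$, $\partial_xV\to0$ as $|x|\to\infty$,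 $V(x,\cdot)\in H^1(\mathbb{R})$, $\partial_xV(x,\cdot)\in L^2(\mathbb{R})$. For $0<\xi<a$ the power dissipation is \[ E_\xi(\delta)=\delta\int_{a-\xi}^{a}\int_{-\infty}^{\infty}|\nabla V(x,y)|^2\,\mathrm{d}y\,\mathrm{d}x . \] *)

theory Defs
  imports "HOL-Analysis.Analysis"
begin

text \<open>Parameters: a > 0 (slab width), beta > 0, lam (the constant lambda),
  delta (loss parameter), rho (charge density, curried as rho x y).\<close>

definition feasible :: "real \<Rightarrow> real \<Rightarrow> bool" where
  "feasible beta lam \<longleftrightarrow>
     (beta < 1 \<longrightarrow> lam > 0) \<and> (beta = 1 \<longrightarrow> lam \<ge> -1) \<and> (beta > 1 \<longrightarrow> lam \<noteq> 0)"

definition tau :: "real \<Rightarrow> real" where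
  "tau beta = (if beta < 1 then (beta + 2) / (beta + 1) else 3 / 2)"

definition mu :: "real \<Rightarrow> real \<Rightarrow> real \<Rightarrow> real" where
  "mu beta lam delta = delta + lam * delta powr beta"

definition eps_c :: "real \<Rightarrow> real \<Rightarrow> real \<Rightarrow> complex" where
  "eps_c beta lam delta = Complex 1 (mu beta lam delta)"

definition eps_s :: "real \<Rightarrow> complex" where
  "eps_s delta = Complex (-1) delta"

definition chi_c :: "real \<Rightarrow> real \<Rightarrow> real \<Rightarrow> complex" where
  "chi_c beta lam delta = eps_s delta / eps_c beta lam delta"

definition psi_p :: "real \<Rightarrow> real \<Rightarrow> real \<Rightarrow> real \<Rightarrow> real \<Rightarrow> complex" where
  "psi_p a beta lam delta k =
     (let ch = chi_c beta lam delta in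
       ((ch + 1) * of_real (exp (\<bar>k\<bar> * a)) + (ch - 1) * of_real (exp (- \<bar>k\<bar> * a))) / (2 * ch))"

definition psi_m :: "real \<Rightarrow> real \<Rightarrow> real \<Rightarrow> real \<Rightarrow> real \<Rightarrow> complex" where
  "psi_m a beta lam delta k =
     (let ch = chi_c beta lam delta in
       of_real \<bar>k\<bar> * eps_s delta / (2 * ch) *
       ((ch + 1) * of_real (exp (\<bar>k\<bar> * a)) - (ch - 1) * of_real (exp (- \<bar>k\<bar> * a))))"

definition supp :: "(real \<Rightarrow> real \<Rightarrow> real) \<Rightarrow> (real \<times> real) set" where
  "supp rho = closure {(x, y). rho x y \<noteq> 0}"

definition d0 :: "(real \<Rightarrow> real \<Rightarrow> real) \<Rightarrow> real" where
  "d0 rho = Inf (fst ` supp rho)"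

definition d1 :: "(real \<Rightarrow> real \<Rightarrow> real) \<Rightarrow> real" where
  "d1 rho = Sup (fst ` supp rho)"

text \<open>The admissible class P (rho extended by 0 outside M).\<close>

definition in_P :: "real \<Rightarrow> (real \<Rightarrow> real \<Rightarrow> real) \<Rightarrow> bool" where
  "in_P a rho \<longleftrightarrow>
     (\<lambda>(x, y). rho x y) \<in> borel_measurable (lborel :: (real \<times> real) measure) \<and>
     integrable (lborel :: (real \<times> real) measure) (\<lambda>(x, y). (rho x y)\<^sup>2) \<and>
     (\<exists>C. AE p in (lborel :: (real \<times> real) measure). \<bar>(case p of (x, y) \<Rightarrow> rho x y)\<bar> \<le> C) \<and>
     compact (supp rho) \<and> supp rho \<subseteq> {(x, y). x > a} \<and>
     0 < emeasure lborel (supp rho) \<and> emeasure lborel (supp rho) < \<infinity> \<and>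
     integral\<^sup>L (lborel :: (real \<times> real) measure) (\<lambda>(x, y). rho x y) = 0"

definition rho_hat :: "(real \<Rightarrow> real \<Rightarrow> real) \<Rightarrow> real \<Rightarrow> real \<Rightarrow> complex" where
  "rho_hat rho x k = (LINT y|lborel. of_real (rho x y) * cis (- (k * y)))"

definition I_k :: "(real \<Rightarrow> real \<Rightarrow> real) \<Rightarrow> real \<Rightarrow> complex" where
  "I_k rho k = (LINT s:{d0 rho..d1 rho}|lborel. rho_hat rho s k * of_real (exp (- \<bar>k\<bar> * s)))"

definition A_k :: "real \<Rightarrow> real \<Rightarrow> real \<Rightarrow> (real \<Rightarrow> real \<Rightarrow> real) \<Rightarrow> real \<Rightarrow> real \<Rightarrow> complex" where
  "A_k a beta lam rho delta k =
     I_k rho k / (of_real (exp (- \<bar>k\<bar> * a)) *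
       (of_real \<bar>k\<bar> * psi_p a beta lam delta k + psi_m a beta lam delta k))"

text \<open>Fourier transform of the potential (the value at k = 0, a null set, is set to 0).\<close>

definition V_hat :: "real \<Rightarrow> real \<Rightarrow> real \<Rightarrow> (real \<Rightarrow> real \<Rightarrow> real) \<Rightarrow> real \<Rightarrow> real \<Rightarrow> real \<Rightarrow> complex" where
  "V_hat a beta lam rho delta x k =
     (let A = A_k a beta lam rho delta k; ch = chi_c beta lam delta; K = \<bar>k\<bar> in
      if k = 0 then 0
      else if x < 0 then A * of_real (exp (K * x))
      else if x \<le> a then A / (2 * ch) *
             ((ch + 1) * of_real (exp (K * x)) + (ch - 1) * of_real (exp (- K * x)))
      else A * psi_p a beta lam delta k * of_real (cosh (K * (x - a)))
           + A * psi_m a beta lam delta k / of_real K * of_real (sinh (K * (x - a)))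
           + (1 / of_real K) * (LINT x':{a..x}|lborel. of_real (sinh (K * (x' - x))) * rho_hat rho x' k))"

definition V :: "real \<Rightarrow> real \<Rightarrow> real \<Rightarrow> (real \<Rightarrow> real \<Rightarrow> real) \<Rightarrow> real \<Rightarrow> real \<Rightarrow> real \<Rightarrow> complex" where
  "V a beta lam rho delta x y =
     (LINT k|lborel. V_hat a beta lam rho delta x k * cis (k * y)) / of_real (2 * pi)"

definition E :: "real \<Rightarrow> real \<Rightarrow> real \<Rightarrow> (real \<Rightarrow> real \<Rightarrow> real) \<Rightarrow> real \<Rightarrow> real \<Rightarrow> ennreal" where
  "E a beta lam rho xi delta =
     ennreal delta *
     (\<integral>\<^sup>+ x\<in>{a - xi..a}. (\<integral>\<^sup>+ y.
        ennreal ((norm (vector_derivative (\<lambda>x'. V a beta lam rho delta x' y) (at x)))\<^sup>2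
               + (norm (vector_derivative (\<lambda>y'. V a beta lam rho delta x y') (at y)))\<^sup>2)
        \<partial>lborel) \<partial>lborel)"

end

theory Submission
  imports Defs "HOL-Probability.Characteristic_Functions"
begin

text \<open>
  For \<open>0 \<le> x \<le> a\<close> the Fourier transform of \<open>V\<close> is \<open>B_k e^(|k| x) + C_k e^(-|k| x)\<close> with
  \<open>|B_k| \<le> |A_k| (\<delta> + \<mu>)/2\<close> and \<open>|C_k| \<le> 3 |A_k|/2\<close>. The denominator of \<open>A_k\<close> has modulus at least
  \<open>|k| (\<delta> (\<delta> + \<mu>) + 3 e^(-2|k| a))/4\<close>, and \<open>|I_k| \<le> \<parallel>\<rho>\<parallel>\<^sub>1 e^(-|k| d0)\<close> because \<open>\<rho>\<close> lives in
  \<open>x \<ge> d0\<close>. Interpolating \<open>1/(u + q) \<le> u^(-\<theta>) q^(\<theta>-1)\<close> between the two terms of the denominator gives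
  \<open>|k| |B_k| e^(|k| x) \<lesssim> (\<delta> + \<mu>) (\<delta> (\<delta> + \<mu>))^(-\<theta>) e^(-(d0 - 3a + 2a\<theta>) |k|)\<close>, while
  \<open>|k| |C_k| e^(-|k| x) \<lesssim> e^(-(d0 - 3a/2) |k|)\<close> for \<open>x \<ge> a/2\<close>. By Plancherel in \<open>y\<close>, \<open>E\<^sub>\<xi>(\<delta>)\<close> is
  at most \<open>\<delta> \<xi> / \<pi>\<close> times the squared \<open>L\<^sup>2\<close> norm of these bounds, which is
  \<open>O(\<delta>^(1 + 2\<gamma> - 2\<theta>(1 + \<gamma>)) + \<delta>)\<close> with \<open>\<gamma> = min 1 \<beta>\<close>, since \<open>\<delta> + \<mu> = O(\<delta>^\<gamma>)\<close>.
  The hypothesis \<open>d0 > \<tau>(\<beta>) a\<close> is exactly what allows a \<open>\<theta> \<in> [0, 1]\<close> with both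
  \<open>d0 - 3a + 2a\<theta>\<close> and \<open>1 + 2\<gamma> - 2\<theta>(1 + \<gamma>)\<close> positive.
\<close>

section \<open>An $L^2$ bound for the inverse Fourier transform\<close>

lemma borel_measurable_cis: "cis \<in> borel_measurable borel"
  by (rule borel_measurable_continuous_onI) (simp add: cis_conv_exp continuous_intros)

lemma measurable_cis[measurable (raw)]:
  "f \<in> borel_measurable M \<Longrightarrow> (\<lambda>x. cis (f x)) \<in> borel_measurable M"
  using measurable_compose[OF _ borel_measurable_cis] by blast

lemma borel_measurable_cnj: "cnj \<in> borel_measurable borel"
  by (rule borel_measurable_continuous_onI) (simp add: continuous_intros)

lemma measurable_cnj[measurable (raw)]:
  "f \<in> borel_measurable M \<Longrightarrow> (\<lambda>x. cnj (f x)) \<in> borel_measurable M"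
  using measurable_compose[OF _ borel_measurable_cnj] by blast

lemma ennreal_norm_integral_le: "ennreal (norm (integral\<^sup>L M f)) \<le> (\<integral>\<^sup>+x. norm (f x) \<partial>M)"
  for f :: "'a \<Rightarrow> 'b::{banach, second_countable_topology}"
  by (cases "integrable M f") (auto simp: integral_norm_bound_ennreal not_integrable_integral_eq)

lemma nn_integral_cmult_real:
  assumes "c \<ge> 0" and "f \<in> borel_measurable M" and "\<And>x. f x \<ge> 0"
  shows "(\<integral>\<^sup>+x. ennreal (c * f x) \<partial>M) = ennreal c * (\<integral>\<^sup>+x. ennreal (f x) \<partial>M)"
proof -
  have "(\<integral>\<^sup>+x. ennreal (c * f x) \<partial>M) = (\<integral>\<^sup>+x. ennreal c * ennreal (f x) \<partial>M)"
    using assms by (intro nn_integral_cong) (simp add: ennreal_mult)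
  also have "\<dots> = ennreal c * (\<integral>\<^sup>+x. ennreal (f x) \<partial>M)"
    using assms by (intro nn_integral_cmult) auto
  finally show ?thesis .
qed

lemma integrable_lborel_pair_product_bound:
  fixes F :: "real \<times> real \<Rightarrow> 'b::{banach, second_countable_topology}"
  assumes Fm: "F \<in> borel_measurable (lborel \<Otimes>\<^sub>M lborel)"
    and u: "integrable lborel u" and v: "integrable lborel v"
    and u0: "\<And>x. u x \<ge> 0" and v0: "\<And>y. v y \<ge> 0"
    and bound: "\<And>x y. norm (F (x, y)) \<le> u x * v y"
  shows "integrable (lborel \<Otimes>\<^sub>M lborel) F"
proof (rule integrableI_bounded[OF Fm])
  have [measurable]: "u \<in> borel_measurable lborel" "v \<in> borel_measurable lborel"
    using u v by auto
  have "(\<integral>\<^sup>+p. norm (F p) \<partial>(lborel \<Otimes>\<^sub>M lborel))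
      \<le> (\<integral>\<^sup>+p. ennreal (u (fst p)) * ennreal (v (snd p)) \<partial>(lborel \<Otimes>\<^sub>M lborel))"
    using bound u0 v0 by (intro nn_integral_mono) (auto simp: ennreal_mult[symmetric] intro!: ennreal_leI)
  also have "\<dots> = (\<integral>\<^sup>+x. \<integral>\<^sup>+y. ennreal (u x) * ennreal (v y) \<partial>lborel \<partial>lborel)"
    by (subst lborel.nn_integral_fst[symmetric]) auto
  also have "\<dots> = (\<integral>\<^sup>+x. ennreal (u x) \<partial>lborel) * (\<integral>\<^sup>+y. ennreal (v y) \<partial>lborel)"
    by (simp add: nn_integral_cmult nn_integral_multc)
  also have "\<dots> < \<infinity>"
    using u v u0 v0 by (auto simp: integrable_iff_bounded ennreal_mult_less_top)
  finally show "(\<integral>\<^sup>+p. norm (F p) \<partial>(lborel \<Otimes>\<^sub>M lborel)) < \<infinity>" .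
qed

lemma integral_weighted_fourier_swap:
  fixes f h :: "real \<Rightarrow> complex" and w :: "real \<Rightarrow> real"
  assumes [measurable]: "f \<in> borel_measurable borel" "h \<in> borel_measurable borel"
    and f: "integrable lborel f" and w: "integrable lborel w" "\<And>y. w y \<ge> 0"
    and h: "\<And>y. norm (h y) \<le> M"
  shows "(LINT y|lborel. of_real (w y) * h y * (LINT k|lborel. f k * cis (k * y)))
       = (LINT k|lborel. f k * (LINT y|lborel. of_real (w y) * h y * cis (k * y)))"
proof -
  have [measurable]: "w \<in> borel_measurable borel"
    using w by (simp add: borel_measurable_integrable)
  have M: "M \<ge> 0"
    using h[of 0] norm_ge_zero[of "h 0"] by linarith
  have "integrable (lborel \<Otimes>\<^sub>M lborel) (\<lambda>(k, y). of_real (w y) * h y * (f k * cis (k * y)))"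
  proof (rule integrable_lborel_pair_product_bound[where u="\<lambda>k. norm (f k)" and v="\<lambda>y. w y * M"])
    fix k y
    show "norm ((\<lambda>(k, y). of_real (w y) * h y * (f k * cis (k * y))) (k, y)) \<le> norm (f k) * (w y * M)"
      using mult_left_mono[OF h[of y], of "w y * norm (f k)"] w(2)[of y]
      by (simp add: norm_mult abs_of_nonneg mult_ac)
  qed (use f w M in auto)
  then have "(LINT y|lborel. LINT k|lborel. of_real (w y) * h y * (f k * cis (k * y)))
      = (LINT k|lborel. LINT y|lborel. of_real (w y) * h y * (f k * cis (k * y)))"
    by (rule lborel_pair.Fubini_integral)
  also have "\<dots> = (LINT k|lborel. f k * (LINT y|lborel. of_real (w y) * h y * cis (k * y)))"
    by (intro Bochner_Integration.integral_cong refl) (simp add: mult_ac)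
  finally show ?thesis
    by simp
qed

text \<open>Gaussian regularisation: \<open>gauss_window n\<close> increases to \<open>1\<close> as \<open>n \<rightarrow> \<infinity>\<close>, and its Fourier
  transform \<open>gauss_kernel n\<close> is \<open>2\<pi>\<close> times the normal density of variance \<open>1/n\<^sup>2\<close>.\<close>

definition gauss_window :: "real \<Rightarrow> real \<Rightarrow> real" where
  "gauss_window n y = exp (- ((y / n)\<^sup>2) / 2)"

definition gauss_kernel :: "real \<Rightarrow> real \<Rightarrow> real" where
  "gauss_kernel n u = n * sqrt (2 * pi) * exp (- ((n * u)\<^sup>2) / 2)"

lemma gauss_window_pos: "gauss_window n y > 0"
  by (simp add: gauss_window_def)

lemma borel_measurable_gauss_window[measurable]: "gauss_window n \<in> borel_measurable borel"
  unfolding gauss_window_def by measurable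

lemma integrable_gauss_window:
  assumes "n > 0"
  shows "integrable lborel (gauss_window n)"
proof -
  have "gauss_window n = (\<lambda>y. sqrt (2 * pi * n\<^sup>2) * normal_density 0 n y)"
    using assms by (auto simp: normal_density_def gauss_window_def power_divide fun_eq_iff)
  then show ?thesis
    using assms by simp
qed

lemma gauss_window_mono:
  assumes "0 < n" "n \<le> m"
  shows "gauss_window n y \<le> gauss_window m y"
proof -
  have "(y / m)\<^sup>2 \<le> (y / n)\<^sup>2"
    using assms by (auto simp: power_divide intro!: divide_left_mono mult_mono)
  then show ?thesis
    by (simp add: gauss_window_def)
qed

lemma gauss_window_tendsto_1: "(\<lambda>m. gauss_window (real (Suc m)) y) \<longlonglongrightarrow> 1"
proof -
  have "(\<lambda>m. y / real (Suc m)) \<longlonglongrightarrow> 0"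
    using LIMSEQ_Suc[OF lim_const_over_n[of y]] by simp
  then have "(\<lambda>m. exp (- ((y / real (Suc m))\<^sup>2) / 2)) \<longlonglongrightarrow> exp (- ((0::real)\<^sup>2) / 2)"
    by (intro tendsto_intros) auto
  then show ?thesis
    by (simp add: gauss_window_def)
qed

lemma borel_measurable_gauss_kernel[measurable]: "gauss_kernel n \<in> borel_measurable borel"
  unfolding gauss_kernel_def by measurable

lemma gauss_kernel_nonneg: "n > 0 \<Longrightarrow> gauss_kernel n u \<ge> 0"
  by (simp add: gauss_kernel_def)

lemma nn_integral_gauss_kernel:
  assumes n: "n > 0"
  shows "(\<integral>\<^sup>+u. ennreal (gauss_kernel n u) \<partial>lborel) = ennreal (2 * pi)"
proof -
  have "gauss_kernel n u = 2 * pi * normal_density 0 (1 / n) u" for u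
    using n by (simp add: gauss_kernel_def normal_density_def power_divide real_sqrt_mult real_sqrt_divide
        field_simps power2_eq_square)
  then have "(\<integral>\<^sup>+u. ennreal (gauss_kernel n u) \<partial>lborel)
      = ennreal (2 * pi) * (\<integral>\<^sup>+u. ennreal (normal_density 0 (1 / n) u) \<partial>lborel)"
    by (simp add: ennreal_mult nn_integral_cmult)
  also have "(\<integral>\<^sup>+u. ennreal (normal_density 0 (1 / n) u) \<partial>lborel) = 1"
    using n by (subst nn_integral_eq_integral) (auto intro: integral_normal_density)
  finally show ?thesis
    by simp
qed

lemma fourier_transform_gauss_window:
  assumes n: "n > 0"
  shows "(LINT y|lborel. of_real (gauss_window n y) * cis (u * y)) = of_real (gauss_kernel n u)"
proof -
  have char: "char std_normal_distribution (n * u)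
      = (LINT x|lborel. std_normal_density x *\<^sub>R iexp (n * u * x))"
    unfolding char_def by (subst integral_density) auto
  have "(LINT y|lborel. of_real (gauss_window n y) * cis (u * y))
      = n *\<^sub>R (LINT x|lborel. of_real (gauss_window n (0 + n * x)) * cis (u * (0 + n * x)))"
    using lborel_integral_real_affine[of n "\<lambda>y. of_real (gauss_window n y) * cis (u * y)" 0] n
    by simp
  also have "(LINT x|lborel. of_real (gauss_window n (0 + n * x)) * cis (u * (0 + n * x)))
      = sqrt (2 * pi) *\<^sub>R (LINT x|lborel. std_normal_density x *\<^sub>R iexp (n * u * x))"
    by (subst integral_scaleR_right[symmetric], rule Bochner_Integration.integral_cong)
      (use n in \<open>auto simp: gauss_window_def std_normal_density_def cis_conv_exp
        scaleR_conv_of_real algebra_simps\<close>)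
  finally show ?thesis
    using char char_std_normal_distribution by (simp add: gauss_kernel_def scaleR_conv_of_real)
qed

lemma schur_test_convolution:
  fixes F K :: "real \<Rightarrow> real"
  assumes [measurable]: "F \<in> borel_measurable borel" "K \<in> borel_measurable borel"
    and F: "\<And>k. F k \<ge> 0" and K: "\<And>u. K u \<ge> 0"
    and mass: "(\<integral>\<^sup>+u. ennreal (K u) \<partial>lborel) = ennreal c"
  shows "(\<integral>\<^sup>+k. ennreal (F k) * (\<integral>\<^sup>+k'. ennreal (F k' * K (k' - k)) \<partial>lborel) \<partial>lborel)
     \<le> ennreal c * (\<integral>\<^sup>+k. ennreal ((F k)\<^sup>2) \<partial>lborel)"
proof -
  define G where "G k = ennreal ((F k)\<^sup>2 / 2)" for k
  have [measurable]: "G \<in> borel_measurable borel"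
    unfolding G_def by measurable
  have mass1: "(\<integral>\<^sup>+k'. ennreal (K (k' - k)) \<partial>lborel) = ennreal c" for k
    using nn_integral_real_affine[of "\<lambda>u. ennreal (K u)" 1 "- k"] mass by simp
  have mass2: "(\<integral>\<^sup>+k. ennreal (K (k' - k)) \<partial>lborel) = ennreal c" for k'
    using nn_integral_real_affine[of "\<lambda>u. ennreal (K u)" "- 1" k'] mass by simp
  have "(\<integral>\<^sup>+k. ennreal (F k) * (\<integral>\<^sup>+k'. ennreal (F k' * K (k' - k)) \<partial>lborel) \<partial>lborel)
      = (\<integral>\<^sup>+k. \<integral>\<^sup>+k'. ennreal (F k * F k' * K (k' - k)) \<partial>lborel \<partial>lborel)"
    using F K by (simp add: nn_integral_cmult[symmetric] ennreal_mult[symmetric] mult.assoc)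
  also have "\<dots> \<le> (\<integral>\<^sup>+k. \<integral>\<^sup>+k'. G k * ennreal (K (k' - k)) + G k' * ennreal (K (k' - k)) \<partial>lborel \<partial>lborel)"
  proof (intro nn_integral_mono)
    fix k k'
    have "F k * F k' * K (k' - k) \<le> ((F k)\<^sup>2 / 2 + (F k')\<^sup>2 / 2) * K (k' - k)"
      using sum_squares_bound[of "F k" "F k'"] K by (intro mult_right_mono) (auto simp: power2_eq_square)
    then show "ennreal (F k * F k' * K (k' - k)) \<le> G k * ennreal (K (k' - k)) + G k' * ennreal (K (k' - k))"
      using K[of "k' - k"] unfolding G_def
      by (simp add: ennreal_mult[symmetric] ennreal_plus[symmetric] distrib_right del: ennreal_plus)
  qed
  also have "\<dots> = (\<integral>\<^sup>+k. \<integral>\<^sup>+k'. G k * ennreal (K (k' - k)) \<partial>lborel \<partial>lborel)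
      + (\<integral>\<^sup>+k'. \<integral>\<^sup>+k. G k' * ennreal (K (k' - k)) \<partial>lborel \<partial>lborel)"
    by (simp add: nn_integral_add lborel_pair.Fubini'[of "\<lambda>k k'. G k' * ennreal (K (k' - k))"])
  also have "\<dots> = (\<integral>\<^sup>+k. G k * ennreal c \<partial>lborel) + (\<integral>\<^sup>+k'. G k' * ennreal c \<partial>lborel)"
    by (simp add: nn_integral_cmult mass1 mass2)
  also have "\<dots> = (\<integral>\<^sup>+k. G k * ennreal c + G k * ennreal c \<partial>lborel)"
    by (simp add: nn_integral_add)
  also have "\<dots> = (\<integral>\<^sup>+k. ennreal c * ennreal ((F k)\<^sup>2) \<partial>lborel)"
  proof (intro nn_integral_cong)
    fix k
    have "G k + G k = ennreal ((F k)\<^sup>2)"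
      by (simp add: G_def ennreal_plus[symmetric] del: ennreal_plus)
    then show "G k * ennreal c + G k * ennreal c = ennreal c * ennreal ((F k)\<^sup>2)"
      by (metis distrib_right mult.commute)
  qed
  also have "\<dots> = ennreal c * (\<integral>\<^sup>+k. ennreal ((F k)\<^sup>2) \<partial>lborel)"
    by (simp add: nn_integral_cmult)
  finally show ?thesis .
qed

lemma fourier_transform_windowed_fourier_inverse:
  fixes f :: "real \<Rightarrow> complex"
  assumes [measurable]: "f \<in> borel_measurable borel" and f: "integrable lborel f" and n: "n > 0"
  shows "(LINT y|lborel. of_real (gauss_window n y) * cis (- (k * y)) * (LINT k'|lborel. f k' * cis (k' * y)))
       = (LINT k'|lborel. f k' * of_real (gauss_kernel n (k' - k)))"
proof -
  have "(LINT y|lborel. of_real (gauss_window n y) * cis (- (k * y)) * (LINT k'|lborel. f k' * cis (k' * y)))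
      = (LINT k'|lborel. f k' * (LINT y|lborel. of_real (gauss_window n y) * cis (- (k * y)) * cis (k' * y)))"
    using f integrable_gauss_window[OF n] gauss_window_pos
    by (intro integral_weighted_fourier_swap[where M=1]) (auto simp: less_imp_le)
  also have "\<dots> = (LINT k'|lborel. f k' * of_real (gauss_kernel n (k' - k)))"
  proof (intro Bochner_Integration.integral_cong refl arg_cong2[where f="(*)"])
    fix k'
    have "(LINT y|lborel. of_real (gauss_window n y) * cis (- (k * y)) * cis (k' * y))
        = (LINT y|lborel. of_real (gauss_window n y) * cis ((k' - k) * y))"
      by (intro Bochner_Integration.integral_cong refl) (simp add: mult.assoc cis_mult algebra_simps)
    then show "(LINT y|lborel. of_real (gauss_window n y) * cis (- (k * y)) * cis (k' * y))
        = of_real (gauss_kernel n (k' - k))"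
      using fourier_transform_gauss_window[OF n] by simp
  qed
  finally show ?thesis .
qed

lemma nn_integral_norm_square_weighted:
  fixes g :: "real \<Rightarrow> complex" and w :: "real \<Rightarrow> real"
  assumes [measurable]: "g \<in> borel_measurable borel" and g: "\<And>y. norm (g y) \<le> M"
    and w: "integrable lborel w" "\<And>y. w y \<ge> 0"
  shows "(\<integral>\<^sup>+y. ennreal ((norm (g y))\<^sup>2 * w y) \<partial>lborel)
       = ennreal (norm (LINT y|lborel. of_real (w y) * cnj (g y) * g y))"
proof -
  have [measurable]: "w \<in> borel_measurable borel"
    using w(1) by (simp add: borel_measurable_integrable)
  have "integrable lborel (\<lambda>y. (norm (g y))\<^sup>2 * w y)"
  proof (rule Bochner_Integration.integrable_bound)
    show "integrable lborel (\<lambda>y. M\<^sup>2 * w y)"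
      using w(1) by simp
    have "(norm (g y))\<^sup>2 * w y \<le> M\<^sup>2 * w y" for y
      using g[of y] w(2)[of y] by (intro mult_right_mono power_mono) auto
    then show "AE y in lborel. norm ((norm (g y))\<^sup>2 * w y) \<le> norm (M\<^sup>2 * w y)"
      using w(2) by (simp add: abs_mult)
  qed measurable
  then have "(\<integral>\<^sup>+y. ennreal ((norm (g y))\<^sup>2 * w y) \<partial>lborel) = ennreal (LINT y|lborel. (norm (g y))\<^sup>2 * w y)"
    using w by (intro nn_integral_eq_integral) auto
  moreover have "(LINT y|lborel. of_real (w y) * cnj (g y) * g y) = of_real (LINT y|lborel. (norm (g y))\<^sup>2 * w y)"
    by (subst integral_complex_of_real[symmetric], intro Bochner_Integration.integral_cong refl)
      (simp add: complex_norm_square[symmetric] mult_ac del: of_real_power)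
  ultimately show ?thesis
    using w by (simp add: integral_nonneg_AE)
qed

lemma windowed_parseval:
  fixes f :: "real \<Rightarrow> complex"
  assumes [measurable]: "f \<in> borel_measurable borel" and f: "integrable lborel f" and n: "n > 0"
  defines "g \<equiv> \<lambda>y. LINT k|lborel. f k * cis (k * y)"
  shows "(LINT y|lborel. of_real (gauss_window n y) * cnj (g y) * g y)
       = (LINT k|lborel. f k * cnj (LINT k'|lborel. f k' * of_real (gauss_kernel n (k' - k))))"
proof -
  define \<Phi> where "\<Phi> k = (LINT y|lborel. of_real (gauss_window n y) * cis (- (k * y)) * g y)" for k
  have g_le: "norm (g y) \<le> (LINT k|lborel. norm (f k))" for y
    unfolding g_def by (rule order_trans[OF integral_norm_bound]) (simp add: norm_mult)
  have "(LINT y|lborel. of_real (gauss_window n y) * cnj (g y) * g y)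
      = (LINT k|lborel. f k * (LINT y|lborel. of_real (gauss_window n y) * cnj (g y) * cis (k * y)))"
    unfolding g_def using f integrable_gauss_window[OF n] gauss_window_pos g_le
    by (intro integral_weighted_fourier_swap) (auto simp: less_imp_le g_def)
  also have "\<dots> = (LINT k|lborel. f k * cnj (\<Phi> k))"
  proof (intro Bochner_Integration.integral_cong refl arg_cong2[where f="(*)"])
    fix k
    have "cnj (\<Phi> k) = (LINT y|lborel. cnj (of_real (gauss_window n y) * cis (- (k * y)) * g y))"
      unfolding \<Phi>_def by (rule Bochner_Integration.integral_cnj[symmetric])
    then show "(LINT y|lborel. of_real (gauss_window n y) * cnj (g y) * cis (k * y)) = cnj (\<Phi> k)"
      by (simp add: cis_cnj mult_ac)
  qed
  also have "\<dots> = (LINT k|lborel. f k * cnj (LINT k'|lborel. f k' * of_real (gauss_kernel n (k' - k))))"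
    unfolding \<Phi>_def g_def fourier_transform_windowed_fourier_inverse[OF _ f n, simplified] ..
  finally show ?thesis .
qed

lemma nn_integral_windowed_fourier_inverse_le:
  fixes f :: "real \<Rightarrow> complex"
  assumes [measurable]: "f \<in> borel_measurable borel" and f: "integrable lborel f" and n: "n > 0"
  shows "(\<integral>\<^sup>+y. ennreal ((norm (LINT k|lborel. f k * cis (k * y)))\<^sup>2 * gauss_window n y) \<partial>lborel)
       \<le> ennreal (2 * pi) * (\<integral>\<^sup>+k. ennreal ((norm (f k))\<^sup>2) \<partial>lborel)"
proof -
  define g where "g y = (LINT k|lborel. f k * cis (k * y))" for y
  define \<Phi> where "\<Phi> k = (LINT k'|lborel. f k' * of_real (gauss_kernel n (k' - k)))" for k
  have [measurable]: "g \<in> borel_measurable borel"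
    unfolding g_def by measurable
  have "norm (g y) \<le> (LINT k|lborel. norm (f k))" for y
    unfolding g_def by (rule order_trans[OF integral_norm_bound]) (simp add: norm_mult)
  then have "(\<integral>\<^sup>+y. ennreal ((norm (g y))\<^sup>2 * gauss_window n y) \<partial>lborel)
      = ennreal (norm (LINT y|lborel. of_real (gauss_window n y) * cnj (g y) * g y))"
    using integrable_gauss_window[OF n] gauss_window_pos[of n]
    by (intro nn_integral_norm_square_weighted) (auto simp: less_imp_le)
  also have "(LINT y|lborel. of_real (gauss_window n y) * cnj (g y) * g y) = (LINT k|lborel. f k * cnj (\<Phi> k))"
    unfolding g_def \<Phi>_def by (rule windowed_parseval[OF _ f n]) simp
  also have "ennreal (norm (LINT k|lborel. f k * cnj (\<Phi> k))) \<le> (\<integral>\<^sup>+k. norm (f k * cnj (\<Phi> k)) \<partial>lborel)"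
    by (rule ennreal_norm_integral_le)
  also have "\<dots> \<le> (\<integral>\<^sup>+k. ennreal (norm (f k)) *
      (\<integral>\<^sup>+k'. ennreal (norm (f k') * gauss_kernel n (k' - k)) \<partial>lborel) \<partial>lborel)"
  proof (intro nn_integral_mono)
    fix k
    have "ennreal (norm (\<Phi> k)) \<le> (\<integral>\<^sup>+k'. norm (f k' * of_real (gauss_kernel n (k' - k))) \<partial>lborel)"
      unfolding \<Phi>_def by (rule ennreal_norm_integral_le)
    also have "\<dots> = (\<integral>\<^sup>+k'. ennreal (norm (f k') * gauss_kernel n (k' - k)) \<partial>lborel)"
      using gauss_kernel_nonneg[OF n] by (intro nn_integral_cong) (simp add: norm_mult)
    finally show "ennreal (norm (f k * cnj (\<Phi> k)))
        \<le> ennreal (norm (f k)) * (\<integral>\<^sup>+k'. ennreal (norm (f k') * gauss_kernel n (k' - k)) \<partial>lborel)"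
      by (simp add: norm_mult ennreal_mult mult_left_mono)
  qed
  also have "\<dots> \<le> ennreal (2 * pi) * (\<integral>\<^sup>+k. ennreal ((norm (f k))\<^sup>2) \<partial>lborel)"
    using gauss_kernel_nonneg[OF n] nn_integral_gauss_kernel[OF n]
    by (intro schur_test_convolution) auto
  finally show ?thesis
    unfolding g_def .
qed

lemma nn_integral_fourier_inverse_square_le:
  fixes f :: "real \<Rightarrow> complex"
  assumes [measurable]: "f \<in> borel_measurable borel" and f: "integrable lborel f"
  shows "(\<integral>\<^sup>+y. ennreal ((norm (LINT k|lborel. f k * cis (k * y)))\<^sup>2) \<partial>lborel)
       \<le> ennreal (2 * pi) * (\<integral>\<^sup>+k. ennreal ((norm (f k))\<^sup>2) \<partial>lborel)"
proof -
  define G where "G m y = ennreal ((norm (LINT k|lborel. f k * cis (k * y)))\<^sup>2 * gauss_window (real (Suc m)) y)"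
    for m y
  have inc: "incseq G"
    unfolding G_def by (intro incseq_SucI le_funI ennreal_leI mult_left_mono gauss_window_mono) auto
  have "(\<integral>\<^sup>+y. ennreal ((norm (LINT k|lborel. f k * cis (k * y)))\<^sup>2) \<partial>lborel)
      = (\<integral>\<^sup>+y. (SUP m. G m y) \<partial>lborel)"
  proof (intro nn_integral_cong)
    fix y
    have "(\<lambda>m. G m y) \<longlonglongrightarrow> ennreal ((norm (LINT k|lborel. f k * cis (k * y)))\<^sup>2 * 1)"
      unfolding G_def by (intro tendsto_ennrealI tendsto_mult tendsto_const gauss_window_tendsto_1)
    moreover have "incseq (\<lambda>m. G m y)"
      using inc by (auto simp: incseq_def le_fun_def)
    ultimately show "ennreal ((norm (LINT k|lborel. f k * cis (k * y)))\<^sup>2) = (SUP m. G m y)"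
      using LIMSEQ_unique LIMSEQ_SUP by fastforce
  qed
  also have "\<dots> = (SUP m. \<integral>\<^sup>+y. G m y \<partial>lborel)"
    by (rule nn_integral_monotone_convergence_SUP[OF inc]) (unfold G_def, measurable)
  also have "\<dots> \<le> ennreal (2 * pi) * (\<integral>\<^sup>+k. ennreal ((norm (f k))\<^sup>2) \<partial>lborel)"
    unfolding G_def using f by (intro SUP_least nn_integral_windowed_fourier_inverse_le) auto
  finally show ?thesis .
qed
definition inverse_fourier :: "(real \<Rightarrow> complex) \<Rightarrow> real \<Rightarrow> complex" where
  "inverse_fourier g y = (LINT k|lborel. g k * cis (k * y)) / of_real (2 * pi)"

lemma nn_integral_inverse_fourier_square_le:
  fixes f :: "real \<Rightarrow> complex"
  assumes [measurable]: "f \<in> borel_measurable borel" and f: "integrable lborel f"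
  shows "(\<integral>\<^sup>+y. ennreal ((norm (inverse_fourier f y))\<^sup>2) \<partial>lborel)
       \<le> ennreal (1 / (2 * pi)) * (\<integral>\<^sup>+k. ennreal ((norm (f k))\<^sup>2) \<partial>lborel)"
proof -
  have "(\<integral>\<^sup>+y. ennreal ((norm (inverse_fourier f y))\<^sup>2) \<partial>lborel)
      = ennreal ((1 / (2 * pi))\<^sup>2) * (\<integral>\<^sup>+y. ennreal ((norm (LINT k|lborel. f k * cis (k * y)))\<^sup>2) \<partial>lborel)"
    unfolding inverse_fourier_def
    by (subst nn_integral_cmult_real[symmetric]) (auto simp: norm_divide power_divide)
  also have "\<dots> \<le> ennreal ((1 / (2 * pi))\<^sup>2) * (ennreal (2 * pi) * (\<integral>\<^sup>+k. ennreal ((norm (f k))\<^sup>2) \<partial>lborel))"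
    using f by (intro mult_left_mono nn_integral_fourier_inverse_square_le) auto
  also have "\<dots> = ennreal (1 / (2 * pi)) * (\<integral>\<^sup>+k. ennreal ((norm (f k))\<^sup>2) \<partial>lborel)"
    by (simp add: ennreal_mult'[symmetric] mult.assoc[symmetric] power2_eq_square)
  finally show ?thesis .
qed

section \<open>Differentiation under the integral sign\<close>

lemma norm_diff_le_of_vector_derivative_bound:
  fixes f f' :: "real \<Rightarrow> 'a::real_normed_vector"
  assumes der: "\<And>x. lo < x \<Longrightarrow> x < hi \<Longrightarrow> (f has_vector_derivative f' x) (at x)"
    and bound: "\<And>x. lo < x \<Longrightarrow> x < hi \<Longrightarrow> norm (f' x) \<le> B"
    and s: "lo < s" "s < hi" and t: "lo < t" "t < hi"
  shows "norm (f t - f s) \<le> B * \<bar>t - s\<bar>"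
proof -
  have ordered: "norm (f v - f u) \<le> B * (v - u)" if "lo < u" "u < v" "v < hi" for u v
  proof -
    have "continuous_on {u..v} f"
      using that by (intro continuous_at_imp_continuous_on ballI has_vector_derivative_continuous[OF der]) auto
    then have "norm (f v - f u) \<le> B * v - B * u"
      using that der bound
      by (intro differentiable_bound_general[where \<phi>="\<lambda>x. B * x" and \<phi>'="\<lambda>x. B" and f'=f'])
        (auto intro!: derivative_eq_intros continuous_intros)
    then show ?thesis
      by (simp add: algebra_simps)
  qed
  show ?thesis
    using ordered[of s t] ordered[of t s] s t
    by (cases s t rule: linorder_cases) (auto simp: norm_minus_commute)
qed

lemma has_vector_derivative_iff_difference_quotient:
  "(f has_vector_derivative D) (at x) \<longleftrightarrow> ((\<lambda>h. (1 / h) *\<^sub>R (f (x + h) - f x)) \<longlongrightarrow> D) (at 0)"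
proof -
  have "\<forall>\<^sub>F h in at 0. norm (f (x + h) - f x - h *\<^sub>R D) / norm h = norm ((1 / h) *\<^sub>R (f (x + h) - f x) - D)"
  proof (rule eventually_at_filter[THEN iffD2, OF always_eventually], intro allI impI)
    fix h :: real assume "h \<noteq> 0"
    then have "(1 / h) *\<^sub>R (f (x + h) - f x) - D = (1 / h) *\<^sub>R (f (x + h) - f x - h *\<^sub>R D)"
      by (simp add: algebra_simps)
    then show "norm (f (x + h) - f x - h *\<^sub>R D) / norm h = norm ((1 / h) *\<^sub>R (f (x + h) - f x) - D)"
      by (simp add: divide_simps)
  qed
  then have "((\<lambda>h. norm (f (x + h) - f x - h *\<^sub>R D) / norm h) \<longlongrightarrow> 0) (at 0)
      \<longleftrightarrow> ((\<lambda>h. (1 / h) *\<^sub>R (f (x + h) - f x)) \<longlongrightarrow> D) (at 0)"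
    by (simp add: tendsto_cong tendsto_norm_zero_iff LIM_zero_iff)
  then show ?thesis
    by (simp add: has_vector_derivative_def has_derivative_at bounded_linear_scaleR_left)
qed

lemma integral_dominated_convergence_at:
  fixes s :: "real \<Rightarrow> 'a \<Rightarrow> 'b::{banach, second_countable_topology}"
  assumes f: "f \<in> borel_measurable M" and w: "integrable M w"
    and meas: "\<forall>\<^sub>F t in at t0. s t \<in> borel_measurable M"
    and lim: "AE x in M. ((\<lambda>t. s t x) \<longlongrightarrow> f x) (at t0)"
    and bound: "\<forall>\<^sub>F t in at t0. AE x in M. norm (s t x) \<le> w x"
  shows "((\<lambda>t. integral\<^sup>L M (s t)) \<longlongrightarrow> integral\<^sup>L M f) (at t0)"
  unfolding tendsto_at_iff_sequentially comp_def
proof (intro allI impI)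
  fix X :: "nat \<Rightarrow> real" assume "\<forall>i. X i \<in> UNIV - {t0}" and "X \<longlonglongrightarrow> t0"
  then have X: "filterlim X (at t0) sequentially"
    by (intro filterlim_atI) auto
  from filterlim_iff[THEN iffD1, OF X, rule_format, OF eventually_conj[OF meas bound]]
  obtain N where N: "\<And>n. N \<le> n \<Longrightarrow> s (X n) \<in> borel_measurable M \<and> (AE x in M. norm (s (X n) x) \<le> w x)"
    by (auto simp: eventually_sequentially)
  show "(\<lambda>n. integral\<^sup>L M (s (X n))) \<longlonglongrightarrow> integral\<^sup>L M f"
  proof (rule LIMSEQ_offset, rule integral_dominated_convergence)
    show "AE x in M. (\<lambda>n. s (X (n + N)) x) \<longlonglongrightarrow> f x"
      using lim by eventually_elim (intro LIMSEQ_ignore_initial_segment filterlim_compose[OF _ X])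
  qed (use f w N in auto)
qed

lemma integrable_of_norm_diff_le:
  fixes f g :: "'a \<Rightarrow> 'b::{banach, second_countable_topology}"
  assumes f: "integrable M f" and w: "integrable M w" and g: "g \<in> borel_measurable M"
    and le: "\<And>x. norm (g x - f x) \<le> w x"
  shows "integrable M g"
proof (rule Bochner_Integration.integrable_bound[where f="\<lambda>x. norm (f x) + w x"])
  have "norm (g x) \<le> norm (f x) + w x" for x
    using norm_triangle_sub[of "g x" "f x"] le[of x] by simp
  then show "AE x in M. norm (g x) \<le> norm (norm (f x) + w x)"
    by (auto intro!: AE_I2 order_trans[OF _ abs_ge_self])
qed (use f w g in auto)

lemma has_vector_derivative_integral_lborel:
  fixes F F' :: "real \<Rightarrow> real \<Rightarrow> 'b::{banach, second_countable_topology}"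
  assumes t0: "lo < t0" "t0 < hi"
    and der: "\<And>t k. lo < t \<Longrightarrow> t < hi \<Longrightarrow> ((\<lambda>t. F t k) has_vector_derivative F' t k) (at t)"
    and Fm: "\<And>t. lo < t \<Longrightarrow> t < hi \<Longrightarrow> F t \<in> borel_measurable borel"
    and F'm: "F' t0 \<in> borel_measurable borel"
    and Fi: "integrable lborel (F t0)"
    and bound: "\<And>t k. lo < t \<Longrightarrow> t < hi \<Longrightarrow> norm (F' t k) \<le> w k"
    and w: "integrable lborel w"
  shows "((\<lambda>t. LINT k|lborel. F t k) has_vector_derivative (LINT k|lborel. F' t0 k)) (at t0)"
proof -
  have diff_le: "norm (F t k - F t0 k) \<le> w k * \<bar>t - t0\<bar>" if "lo < t" "t < hi" for t k
    by (rule norm_diff_le_of_vector_derivative_bound[where f'="\<lambda>t. F' t k"]) (use that t0 der bound in auto)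
  have "\<forall>\<^sub>F h in nhds 0. h \<in> {lo - t0<..<hi - t0}"
    using t0 by (intro eventually_nhds_in_open) auto
  then have near: "\<forall>\<^sub>F h in at 0. h \<noteq> 0 \<and> lo < t0 + h \<and> t0 + h < hi"
    by (auto simp: eventually_at_filter elim: eventually_mono)
  define q where "q h k = (1 / h) *\<^sub>R (F (t0 + h) k - F t0 k)" for h k
  have integral_q: "\<forall>\<^sub>F h in at 0. (LINT k|lborel. q h k)
      = (1 / h) *\<^sub>R ((LINT k|lborel. F (t0 + h) k) - (LINT k|lborel. F t0 k))"
    using near
  proof eventually_elim
    case (elim h)
    have "integrable lborel (F (t0 + h))"
      using diff_le[of "t0 + h"] elim w Fm
      by (intro integrable_of_norm_diff_le[OF Fi, where w="\<lambda>k. w k * \<bar>h\<bar>"]) (auto simp: mult.commute)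
    then show ?case
      unfolding q_def using Fi by simp
  qed
  have "((\<lambda>h. LINT k|lborel. q h k) \<longlongrightarrow> (LINT k|lborel. F' t0 k)) (at 0)"
  proof (rule integral_dominated_convergence_at[OF _ w])
    show "\<forall>\<^sub>F h in at 0. q h \<in> borel_measurable lborel"
      using near by eventually_elim (use Fm t0 in \<open>simp add: q_def[abs_def]\<close>)
    show "AE k in lborel. ((\<lambda>h. q h k) \<longlongrightarrow> F' t0 k) (at 0)"
      using der t0 by (simp add: q_def has_vector_derivative_iff_difference_quotient)
    show "\<forall>\<^sub>F h in at 0. AE k in lborel. norm (q h k) \<le> w k"
      using near
    proof eventually_elim
      case (elim h)
      then have "norm (q h k) \<le> w k" for k
        using diff_le[of "t0 + h" k] by (simp add: q_def divide_simps mult.commute)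
      then show ?case
        by simp
    qed
  qed (use F'm in simp)
  then show ?thesis
    unfolding has_vector_derivative_iff_difference_quotient by (rule Lim_transform_eventually[OF _ integral_q])
qed

section \<open>Harmonic functions in a strip with exponentially decaying coefficients\<close>

lemma nn_integral_exp_neg_abs_le:
  assumes c: "c > 0"
  shows "(\<integral>\<^sup>+k. ennreal (exp (- c * \<bar>k\<bar>)) \<partial>lborel) \<le> ennreal (2 / c)"
proof -
  have one: "(\<integral>\<^sup>+k. ennreal (exponential_density c k) \<partial>lborel) = 1"
  proof -
    interpret prob_space "density lborel (exponential_density c)"
      using prob_space_exponential_density[OF c] .
    show ?thesis
      using emeasure_space_1 by (simp add: emeasure_density)
  qed
  have "exp (- c * \<bar>k\<bar>) \<le> (1 / c) * (exponential_density c k + exponential_density c (0 + (- 1) * k))" for k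
  proof (cases "k < 0")
    case True
    then show ?thesis using c by (simp add: exponential_density_def mult.commute)
  next
    case False
    then show ?thesis using c by (simp add: exponential_density_def mult.commute)
  qed
  then have "(\<integral>\<^sup>+k. ennreal (exp (- c * \<bar>k\<bar>)) \<partial>lborel)
      \<le> (\<integral>\<^sup>+k. ennreal (1 / c) * (ennreal (exponential_density c k) + ennreal (exponential_density c (0 + (- 1) * k))) \<partial>lborel)"
    using c exponential_density_nonneg[OF c]
    by (intro nn_integral_mono) (simp add: ennreal_mult[symmetric] ennreal_plus[symmetric] del: ennreal_plus)
  also have "\<dots> = ennreal (1 / c) * (1 + 1)"
    using nn_integral_real_affine[of "\<lambda>k. ennreal (exponential_density c k)" "- 1" 0] one
    by (simp add: nn_integral_cmult nn_integral_add)
  also have "ennreal (1 / c) * (1 + 1) = ennreal (2 / c)"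
    using ennreal_mult[of "1 / c" 2] c by (simp add: one_add_one)
  finally show ?thesis .
qed

lemma integrable_exp_neg_abs:
  assumes "c > 0"
  shows "integrable lborel (\<lambda>k::real. exp (- c * \<bar>k\<bar>))"
proof (rule integrableI_bounded)
  show "(\<integral>\<^sup>+k. ennreal (norm (exp (- c * \<bar>k\<bar>))) \<partial>lborel) < \<infinity>"
    using nn_integral_exp_neg_abs_le[OF assms] by (simp add: le_less_trans)
qed measurable
lemma integrable_abs_mult_exp_neg_abs:
  assumes c: "c > 0"
  shows "integrable lborel (\<lambda>k::real. \<bar>k\<bar> * exp (- c * \<bar>k\<bar>))"
proof (rule Bochner_Integration.integrable_bound)
  show "integrable lborel (\<lambda>k::real. 2 / c * exp (- (c / 2) * \<bar>k\<bar>))"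
    using integrable_exp_neg_abs[of "c / 2"] c by simp
  have "\<bar>k\<bar> * exp (- c * \<bar>k\<bar>) \<le> 2 / c * exp (- (c / 2) * \<bar>k\<bar>)" for k :: real
  proof -
    have "\<bar>k\<bar> \<le> 2 / c * exp (c / 2 * \<bar>k\<bar>)"
      using exp_ge_add_one_self[of "c / 2 * \<bar>k\<bar>"] c by (simp add: field_simps)
    then have "\<bar>k\<bar> * exp (- c * \<bar>k\<bar>) \<le> 2 / c * exp (c / 2 * \<bar>k\<bar>) * exp (- c * \<bar>k\<bar>)"
      by (intro mult_right_mono) auto
    then show ?thesis
      by (simp add: mult.assoc exp_add[symmetric])
  qed
  then show "AE k in lborel. norm (\<bar>k\<bar> * exp (- c * \<bar>k\<bar>)) \<le> norm (2 / c * exp (- (c / 2) * \<bar>k\<bar>))"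
    using c by (simp add: abs_mult)
qed measurable

definition exp_modes :: "(real \<Rightarrow> complex) \<Rightarrow> (real \<Rightarrow> complex) \<Rightarrow> real \<Rightarrow> real \<Rightarrow> complex" where
  "exp_modes b c x k = b k * of_real (exp (\<bar>k\<bar> * x)) + c k * of_real (exp (- \<bar>k\<bar> * x))"

definition exp_modes_dx :: "(real \<Rightarrow> complex) \<Rightarrow> (real \<Rightarrow> complex) \<Rightarrow> real \<Rightarrow> real \<Rightarrow> complex" where
  "exp_modes_dx b c x k = of_real \<bar>k\<bar> * (b k * of_real (exp (\<bar>k\<bar> * x)) - c k * of_real (exp (- \<bar>k\<bar> * x)))"

definition exp_modes_weight :: "(real \<Rightarrow> complex) \<Rightarrow> (real \<Rightarrow> complex) \<Rightarrow> real \<Rightarrow> real \<Rightarrow> real" where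
  "exp_modes_weight b c x k = \<bar>k\<bar> * (norm (b k) * exp (\<bar>k\<bar> * x) + norm (c k) * exp (- \<bar>k\<bar> * x))"

lemma has_vector_derivative_exp_modes:
  "((\<lambda>x. exp_modes b c x k) has_vector_derivative exp_modes_dx b c x k) (at x)"
  unfolding exp_modes_def exp_modes_dx_def
  by (auto intro!: derivative_eq_intros simp: algebra_simps)

lemma norm_exp_modes_le:
  "norm (exp_modes b c x k) \<le> norm (b k) * exp (\<bar>k\<bar> * x) + norm (c k) * exp (- \<bar>k\<bar> * x)"
  unfolding exp_modes_def by (rule order_trans[OF norm_triangle_ineq]) (simp add: norm_mult)

lemma norm_exp_modes_dx_le: "norm (exp_modes_dx b c x k) \<le> exp_modes_weight b c x k"
  unfolding exp_modes_dx_def exp_modes_weight_def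
  by (simp add: norm_mult mult_left_mono norm_triangle_le_diff)

lemma norm_exp_modes_ik_le: "norm (exp_modes b c x k * (of_real k * \<i>)) \<le> exp_modes_weight b c x k"
  unfolding exp_modes_weight_def
  using mult_left_mono[OF norm_exp_modes_le abs_ge_zero] by (simp add: norm_mult mult.commute)

lemma has_vector_derivative_cis_mult:
  "((\<lambda>y. cis (k * y)) has_vector_derivative (of_real k * \<i> * cis (k * y))) (at y)"
proof -
  have "((\<lambda>y. cis (k * y)) has_derivative (\<lambda>t. (k * t) *\<^sub>R (\<i> * cis (k * y)))) (at y)"
    by (intro has_derivative_cis derivative_intros)
  moreover have "(\<lambda>t. (k * t) *\<^sub>R (\<i> * cis (k * y))) = (\<lambda>t. t *\<^sub>R (of_real k * \<i> * cis (k * y)))"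
    by (auto simp: scaleR_conv_of_real fun_eq_iff)
  ultimately show ?thesis
    by (simp add: has_vector_derivative_def)
qed

locale decaying_modes =
  fixes b c :: "real \<Rightarrow> complex" and a d P :: real
  assumes measurable_b[measurable]: "b \<in> borel_measurable borel"
    and measurable_c[measurable]: "c \<in> borel_measurable borel"
    and d_gt_a: "d > a"
    and norm_b_le: "\<And>k. norm (b k) \<le> P * exp (- \<bar>k\<bar> * d)"
    and norm_c_le: "\<And>k. norm (c k) \<le> P * exp (- \<bar>k\<bar> * d)"
begin

lemma P_nonneg: "P \<ge> 0"
  using order_trans[OF norm_ge_zero norm_b_le[of 0]] by simp

lemma mode_sum_le_exp:
  assumes "0 \<le> x" "x \<le> a"
  shows "norm (b k) * exp (\<bar>k\<bar> * x) + norm (c k) * exp (- \<bar>k\<bar> * x) \<le> 2 * P * exp (- (d - a) * \<bar>k\<bar>)"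
proof -
  have kx: "0 \<le> \<bar>k\<bar> * x" "\<bar>k\<bar> * x \<le> \<bar>k\<bar> * a"
    using assms by (auto intro: mult_left_mono)
  have "exp (- \<bar>k\<bar> * d) * exp (\<bar>k\<bar> * x) \<le> exp (- (d - a) * \<bar>k\<bar>)"
    and "exp (- \<bar>k\<bar> * d) * exp (- \<bar>k\<bar> * x) \<le> exp (- (d - a) * \<bar>k\<bar>)"
    unfolding exp_add[symmetric] exp_le_cancel_iff using kx by (simp_all add: algebra_simps)
  then have "norm (b k) * exp (\<bar>k\<bar> * x) + norm (c k) * exp (- \<bar>k\<bar> * x)
      \<le> P * exp (- (d - a) * \<bar>k\<bar>) + P * exp (- (d - a) * \<bar>k\<bar>)"
    using norm_b_le[of k] norm_c_le[of k] P_nonneg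
    by (intro add_mono; smt (verit) exp_gt_zero mult.assoc mult_left_mono mult_right_mono)
  then show ?thesis
    by simp
qed

lemma integrable_exp_modes_weight_bound: "integrable lborel (\<lambda>k. 2 * P * (\<bar>k\<bar> * exp (- (d - a) * \<bar>k\<bar>)))"
  using integrable_abs_mult_exp_neg_abs[of "d - a"] d_gt_a by simp

lemma exp_modes_weight_le:
  assumes "0 \<le> x" "x \<le> a"
  shows "exp_modes_weight b c x k \<le> 2 * P * (\<bar>k\<bar> * exp (- (d - a) * \<bar>k\<bar>))"
  unfolding exp_modes_weight_def using mult_left_mono[OF mode_sum_le_exp[OF assms] abs_ge_zero[of k]]
  by (simp add: mult_ac)

lemma integrable_exp_modes_cis:
  assumes "0 \<le> x" "x \<le> a"
  shows "integrable lborel (\<lambda>k. exp_modes b c x k * cis (k * y))"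
proof (rule Bochner_Integration.integrable_bound)
  show "integrable lborel (\<lambda>k. 2 * P * exp (- (d - a) * \<bar>k\<bar>))"
    using integrable_exp_neg_abs[of "d - a"] d_gt_a by simp
  have "norm (exp_modes b c x k) \<le> 2 * P * exp (- (d - a) * \<bar>k\<bar>)" for k
    using norm_exp_modes_le mode_sum_le_exp[OF assms] by (rule order_trans)
  then show "AE k in lborel. norm (exp_modes b c x k * cis (k * y)) \<le> norm (2 * P * exp (- (d - a) * \<bar>k\<bar>))"
    using P_nonneg by (simp add: norm_mult)
qed (simp add: exp_modes_def)

lemma has_vector_derivative_inverse_fourier_x:
  assumes "0 < x" "x < a"
  shows "((\<lambda>x. inverse_fourier (exp_modes b c x) y) has_vector_derivative
    inverse_fourier (exp_modes_dx b c x) y) (at x)"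
proof -
  have "((\<lambda>x. LINT k|lborel. exp_modes b c x k * cis (k * y)) has_vector_derivative
      (LINT k|lborel. exp_modes_dx b c x k * cis (k * y))) (at x)"
  proof (rule has_vector_derivative_integral_lborel[where lo=0 and hi=a, OF assms _ _ _ _ _ integrable_exp_modes_weight_bound])
    show "((\<lambda>x. exp_modes b c x k * cis (k * y)) has_vector_derivative exp_modes_dx b c t k * cis (k * y)) (at t)"
      for t k
      by (rule has_vector_derivative_mult_left[OF has_vector_derivative_exp_modes])
    show "norm (exp_modes_dx b c t k * cis (k * y)) \<le> 2 * P * (\<bar>k\<bar> * exp (- (d - a) * \<bar>k\<bar>))"
      if "0 < t" "t < a" for t k
      using order_trans[OF norm_exp_modes_dx_le exp_modes_weight_le] that by (simp add: norm_mult)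
    show "integrable lborel (\<lambda>k. exp_modes b c x k * cis (k * y))"
      using assms by (intro integrable_exp_modes_cis) auto
  qed (simp_all add: exp_modes_def exp_modes_dx_def)
  then show ?thesis
    unfolding inverse_fourier_def by (rule has_vector_derivative_divide)
qed

lemma has_vector_derivative_inverse_fourier_y:
  assumes "0 \<le> x" "x \<le> a"
  shows "((\<lambda>y. inverse_fourier (exp_modes b c x) y) has_vector_derivative
    inverse_fourier (\<lambda>k. exp_modes b c x k * (of_real k * \<i>)) y) (at y)"
proof -
  have "((\<lambda>y. LINT k|lborel. exp_modes b c x k * cis (k * y)) has_vector_derivative
      (LINT k|lborel. exp_modes b c x k * (of_real k * \<i> * cis (k * y)))) (at y)"
  proof (rule has_vector_derivative_integral_lborel[where lo="y - 1" and hi="y + 1", OF _ _ _ _ _ _ _ integrable_exp_modes_weight_bound])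
    show "((\<lambda>y. exp_modes b c x k * cis (k * y)) has_vector_derivative
        exp_modes b c x k * (of_real k * \<i> * cis (k * t))) (at t)" for t k
      by (rule has_vector_derivative_mult_right[OF has_vector_derivative_cis_mult])
    show "norm (exp_modes b c x k * (of_real k * \<i> * cis (k * t))) \<le> 2 * P * (\<bar>k\<bar> * exp (- (d - a) * \<bar>k\<bar>))"
      for t k
      using order_trans[OF norm_exp_modes_ik_le exp_modes_weight_le[OF assms]] by (simp add: norm_mult mult.assoc)
    show "integrable lborel (\<lambda>k. exp_modes b c x k * cis (k * y))"
      using assms by (rule integrable_exp_modes_cis)
  qed (simp_all add: exp_modes_def)
  then show ?thesis
    unfolding inverse_fourier_def by (auto dest: has_vector_derivative_divide simp: mult_ac)
qed


lemma nn_integral_gradient_square_le: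
  assumes U: "\<And>x y. 0 \<le> x \<Longrightarrow> x \<le> a \<Longrightarrow> U x y = inverse_fourier (exp_modes b c x) y"
    and x: "0 < x" "x < a"
    and h: "\<And>k. exp_modes_weight b c x k \<le> h k" "h \<in> borel_measurable borel"
  shows "(\<integral>\<^sup>+y. ennreal ((norm (vector_derivative (\<lambda>x'. U x' y) (at x)))\<^sup>2
            + (norm (vector_derivative (\<lambda>y'. U x y') (at y)))\<^sup>2) \<partial>lborel)
     \<le> ennreal (1 / pi) * (\<integral>\<^sup>+k. ennreal ((h k)\<^sup>2) \<partial>lborel)"
proof -
  define fx where "fx = exp_modes_dx b c x"
  define fy where "fy k = exp_modes b c x k * (of_real k * \<i>)" for k
  have meas[measurable]: "fx \<in> borel_measurable borel" "fy \<in> borel_measurable borel"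
    unfolding fx_def fy_def exp_modes_dx_def[abs_def] exp_modes_def by measurable
  have dx: "vector_derivative (\<lambda>x'. U x' y) (at x) = inverse_fourier fx y" for y
  proof (rule vector_derivative_at, rule has_vector_derivative_transform_within_open[where S="{0<..<a}"])
    show "((\<lambda>x. inverse_fourier (exp_modes b c x) y) has_vector_derivative inverse_fourier fx y) (at x)"
      unfolding fx_def using x by (rule has_vector_derivative_inverse_fourier_x)
  qed (use x U in auto)
  have dy: "vector_derivative (\<lambda>y'. U x y') (at y) = inverse_fourier fy y" for y
    unfolding fy_def U[OF less_imp_le[OF x(1)] less_imp_le[OF x(2)]]
    using x by (intro vector_derivative_at has_vector_derivative_inverse_fourier_y) auto
  have fx_le: "norm (fx k) \<le> h k" and fy_le: "norm (fy k) \<le> h k" for k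
    unfolding fx_def fy_def using norm_exp_modes_dx_le norm_exp_modes_ik_le h(1) by (blast intro: order_trans)+
  have weight_le: "exp_modes_weight b c x k \<le> \<bar>2 * P * (\<bar>k\<bar> * exp (- (d - a) * \<bar>k\<bar>))\<bar>" for k
    using x exp_modes_weight_le[of x k] by auto
  have "integrable lborel fx" "integrable lborel fy"
    using order_trans[OF norm_exp_modes_dx_le weight_le] order_trans[OF norm_exp_modes_ik_le weight_le] meas
    by (auto intro!: Bochner_Integration.integrable_bound[OF integrable_exp_modes_weight_bound] simp: fx_def fy_def)
  have sq_le: "(\<integral>\<^sup>+k. ennreal ((norm (f k))\<^sup>2) \<partial>lborel) \<le> (\<integral>\<^sup>+k. ennreal ((h k)\<^sup>2) \<partial>lborel)"
    if "\<And>k. norm (f k) \<le> h k" for f :: "real \<Rightarrow> complex"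
    using that by (intro nn_integral_mono ennreal_leI power_mono) auto
  have "(\<integral>\<^sup>+y. ennreal ((norm (vector_derivative (\<lambda>x'. U x' y) (at x)))\<^sup>2
            + (norm (vector_derivative (\<lambda>y'. U x y') (at y)))\<^sup>2) \<partial>lborel)
      = (\<integral>\<^sup>+y. ennreal ((norm (inverse_fourier fx y))\<^sup>2) \<partial>lborel)
        + (\<integral>\<^sup>+y. ennreal ((norm (inverse_fourier fy y))\<^sup>2) \<partial>lborel)"
    unfolding dx dy by (subst nn_integral_add[symmetric]) (auto simp: inverse_fourier_def)
  also have "\<dots> \<le> ennreal (1 / (2 * pi)) * (\<integral>\<^sup>+k. ennreal ((h k)\<^sup>2) \<partial>lborel)
        + ennreal (1 / (2 * pi)) * (\<integral>\<^sup>+k. ennreal ((h k)\<^sup>2) \<partial>lborel)"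
    using \<open>integrable lborel fx\<close> \<open>integrable lborel fy\<close> sq_le[OF fx_le] sq_le[OF fy_le]
    by (intro add_mono order_trans[OF nn_integral_inverse_fourier_square_le] mult_left_mono) auto
  also have "\<dots> = ennreal (1 / pi) * (\<integral>\<^sup>+k. ennreal ((h k)\<^sup>2) \<partial>lborel)"
    by (simp add: distrib_right[symmetric] ennreal_plus[symmetric] del: ennreal_plus)
  finally show ?thesis .
qed

end

section \<open>The Fourier coefficients of the potential in the slab\<close>

definition B_k :: "real \<Rightarrow> real \<Rightarrow> real \<Rightarrow> (real \<Rightarrow> real \<Rightarrow> real) \<Rightarrow> real \<Rightarrow> real \<Rightarrow> complex" where
  "B_k a beta lam rho delta k = (if k = 0 then 0 else
     A_k a beta lam rho delta k * (chi_c beta lam delta + 1) / (2 * chi_c beta lam delta))"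

definition C_k :: "real \<Rightarrow> real \<Rightarrow> real \<Rightarrow> (real \<Rightarrow> real \<Rightarrow> real) \<Rightarrow> real \<Rightarrow> real \<Rightarrow> complex" where
  "C_k a beta lam rho delta k = (if k = 0 then 0 else
     A_k a beta lam rho delta k * (chi_c beta lam delta - 1) / (2 * chi_c beta lam delta))"

definition A_k_denom :: "real \<Rightarrow> real \<Rightarrow> real \<Rightarrow> real \<Rightarrow> real \<Rightarrow> complex" where
  "A_k_denom a beta lam delta k =
     of_real (exp (- \<bar>k\<bar> * a)) * (of_real \<bar>k\<bar> * psi_p a beta lam delta k + psi_m a beta lam delta k)"

lemma eps_c_nonzero: "eps_c beta lam delta \<noteq> 0"
  by (simp add: eps_c_def complex_eq_iff)

lemma eps_s_nonzero: "eps_s delta \<noteq> 0"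
  by (simp add: eps_s_def complex_eq_iff)

lemma chi_c_nonzero: "chi_c beta lam delta \<noteq> 0"
  using eps_c_nonzero eps_s_nonzero by (simp add: chi_c_def)

lemma V_hat_slab:
  assumes "0 \<le> x" "x \<le> a"
  shows "V_hat a beta lam rho delta x = exp_modes (B_k a beta lam rho delta) (C_k a beta lam rho delta) x"
proof
  fix k
  show "V_hat a beta lam rho delta x k = exp_modes (B_k a beta lam rho delta) (C_k a beta lam rho delta) x k"
    using assms chi_c_nonzero[of beta lam delta]
    by (auto simp: V_hat_def B_k_def C_k_def exp_modes_def Let_def field_simps)
qed

lemma V_slab:
  assumes "0 \<le> x" "x \<le> a"
  shows "V a beta lam rho delta x y
       = inverse_fourier (exp_modes (B_k a beta lam rho delta) (C_k a beta lam rho delta) x) y"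
  unfolding V_def inverse_fourier_def V_hat_slab[OF assms] ..

lemma A_k_eq: "A_k a beta lam rho delta k = I_k rho k / A_k_denom a beta lam delta k"
  by (simp add: A_k_def A_k_denom_def)

lemma A_k_denom_eq:
  "A_k_denom a beta lam delta k = of_real \<bar>k\<bar> / (2 * eps_s delta) *
     ((eps_s delta + eps_c beta lam delta) * (1 + eps_s delta)
      + (eps_s delta - eps_c beta lam delta) * (1 - eps_s delta) * of_real ((exp (- \<bar>k\<bar> * a))\<^sup>2))"
proof -
  have field_identity: "e * (K * ((es / ec + 1) * E + (es / ec - 1) * e) / (2 * (es / ec))
          + K * es / (2 * (es / ec)) * ((es / ec + 1) * E - (es / ec - 1) * e))
       = K / (2 * es) * ((es + ec) * (1 + es) + (es - ec) * (1 - es) * (e * e))"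
    if "es \<noteq> 0" "ec \<noteq> 0" "e * E = 1" for es ec e E K :: complex
  proof -
    have "e * (K * ((es / ec + 1) * E + (es / ec - 1) * e) / (2 * (es / ec))
          + K * es / (2 * (es / ec)) * ((es / ec + 1) * E - (es / ec - 1) * e))
      = K / (2 * es) * ((es + ec) * (e * E) * (1 + es) + (es - ec) * (1 - es) * (e * e))"
      using that(1,2) by (simp add: field_simps)
    then show ?thesis
      using that by simp
  qed
  have "complex_of_real (exp (- \<bar>k\<bar> * a)) * complex_of_real (exp (\<bar>k\<bar> * a)) = 1"
    by (simp flip: of_real_mult exp_add)
  from field_identity[OF eps_s_nonzero eps_c_nonzero this, of "of_real \<bar>k\<bar>" delta beta lam]
  show ?thesis
    unfolding A_k_denom_def psi_p_def psi_m_def Let_def chi_c_def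
    by (simp add: mult.assoc power2_eq_square)
qed

text \<open>Only the real part of the bracket in \<^const>\<open>A_k_denom\<close> is estimated; it is negative, and both of
  its terms have the same sign once \<open>\<mu> \<ge> 0\<close>.\<close>

lemma norm_A_k_denom_ge:
  assumes delta: "0 < delta" "delta \<le> 1" and mu: "mu beta lam delta \<ge> 0"
  shows "norm (A_k_denom a beta lam delta k)
     \<ge> \<bar>k\<bar> * (delta * (delta + mu beta lam delta) + 3 * (exp (- \<bar>k\<bar> * a))\<^sup>2) / 4"
proof -
  define q where "q = (exp (- \<bar>k\<bar> * a))\<^sup>2"
  define m where "m = mu beta lam delta"
  define B where "B = (eps_s delta + eps_c beta lam delta) * (1 + eps_s delta)
      + (eps_s delta - eps_c beta lam delta) * (1 - eps_s delta) * of_real q"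
  have "Re B = - delta * (delta + m) - q * (4 - delta\<^sup>2 + delta * m)"
    unfolding B_def m_def by (simp add: eps_s_def eps_c_def algebra_simps power2_eq_square)
  moreover have "q * 3 \<le> q * (4 - delta\<^sup>2 + delta * m)"
  proof -
    have "delta\<^sup>2 \<le> 1" "delta * m \<ge> 0"
      using delta mu by (auto simp: m_def power_le_one)
    then show ?thesis
      by (intro mult_left_mono) (auto simp: q_def)
  qed
  ultimately have "norm B \<ge> delta * (delta + m) + 3 * q"
    using abs_Re_le_cmod[of B] by linarith
  moreover have "norm (eps_s delta) \<le> 2"
  proof -
    have "delta\<^sup>2 \<le> 1"
      using delta by (simp add: power_le_one)
    then have "sqrt (1 + delta\<^sup>2) \<le> sqrt (2\<^sup>2)"
      by (intro real_sqrt_le_mono) simp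
    then show ?thesis
      by (simp add: eps_s_def cmod_def)
  qed
  moreover have "delta * (delta + m) + 3 * q \<ge> 0"
    using delta mu by (simp add: q_def m_def)
  ultimately have "\<bar>k\<bar> * (delta * (delta + m) + 3 * q) / 4 \<le> \<bar>k\<bar> * norm B / (2 * norm (eps_s delta))"
    using eps_s_nonzero[of delta]
    by (intro frac_le mult_left_mono) auto
  also have "\<dots> = norm (A_k_denom a beta lam delta k)"
    unfolding A_k_denom_eq B_def q_def by (simp add: norm_mult norm_divide)
  finally show ?thesis
    unfolding q_def m_def .
qed

lemma abs_mult_norm_A_k_le:
  assumes delta: "0 < delta" "delta \<le> 1" and mu: "mu beta lam delta \<ge> 0"
  shows "\<bar>k\<bar> * norm (A_k a beta lam rho delta k)
     \<le> 4 * norm (I_k rho k) / (delta * (delta + mu beta lam delta) + 3 * (exp (- \<bar>k\<bar> * a))\<^sup>2)"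
proof (cases "k = 0")
  case False
  define L where "L = delta * (delta + mu beta lam delta) + 3 * (exp (- \<bar>k\<bar> * a))\<^sup>2"
  have L: "L > 0"
    unfolding L_def using delta mu by (intro add_nonneg_pos) auto
  have "\<bar>k\<bar> * L / 4 \<le> norm (A_k_denom a beta lam delta k)"
    unfolding L_def by (rule norm_A_k_denom_ge[OF delta mu])
  moreover have "\<bar>k\<bar> * L / 4 > 0"
    using False L by simp
  ultimately have "norm (A_k_denom a beta lam delta k) > 0"
    by linarith
  with \<open>\<bar>k\<bar> * L / 4 \<le> _\<close> \<open>\<bar>k\<bar> * L / 4 > 0\<close> have "\<bar>k\<bar> * (norm (I_k rho k) / norm (A_k_denom a beta lam delta k))
      \<le> \<bar>k\<bar> * (norm (I_k rho k) / (\<bar>k\<bar> * L / 4))"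
    by (intro mult_left_mono divide_left_mono) auto
  then show ?thesis
    using False unfolding A_k_eq L_def[symmetric] by (simp add: norm_divide algebra_simps)
qed (use delta mu in simp)

lemma norm_B_k_le:
  assumes "0 < delta" "mu beta lam delta \<ge> 0"
  shows "norm (B_k a beta lam rho delta k) \<le> norm (A_k a beta lam rho delta k) * (delta + mu beta lam delta) / 2"
proof (cases "k = 0")
  case False
  have "(chi_c beta lam delta + 1) / (2 * chi_c beta lam delta)
      = (eps_s delta + eps_c beta lam delta) / (2 * eps_s delta)"
    using eps_c_nonzero[of beta lam delta] eps_s_nonzero[of delta] by (simp add: chi_c_def field_simps)
  then have "norm (B_k a beta lam rho delta k)
      = norm (A_k a beta lam rho delta k) * norm (eps_s delta + eps_c beta lam delta) / (2 * norm (eps_s delta))"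
    using False unfolding B_k_def by (simp add: norm_mult norm_divide flip: times_divide_eq_right)
  also have "norm (eps_s delta + eps_c beta lam delta) = delta + mu beta lam delta"
    using assms by (simp add: eps_s_def eps_c_def cmod_def)
  also have "norm (eps_s delta) \<ge> 1"
    by (simp add: eps_s_def cmod_def)
  then have "norm (A_k a beta lam rho delta k) * (delta + mu beta lam delta) / (2 * norm (eps_s delta))
      \<le> norm (A_k a beta lam rho delta k) * (delta + mu beta lam delta) / 2"
    using assms by (intro divide_left_mono) auto
  finally show ?thesis .
qed (use assms in \<open>simp add: B_k_def\<close>)

lemma norm_C_k_le:
  "norm (C_k a beta lam rho delta k) \<le> norm (A_k a beta lam rho delta k) * (2 + \<bar>delta - mu beta lam delta\<bar>) / 2"
proof (cases "k = 0")
  case False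
  have "(chi_c beta lam delta - 1) / (2 * chi_c beta lam delta)
      = (eps_s delta - eps_c beta lam delta) / (2 * eps_s delta)"
    using eps_c_nonzero[of beta lam delta] eps_s_nonzero[of delta] by (simp add: chi_c_def field_simps)
  then have "norm (C_k a beta lam rho delta k)
      = norm (A_k a beta lam rho delta k) * norm (eps_s delta - eps_c beta lam delta) / (2 * norm (eps_s delta))"
    using False unfolding C_k_def by (simp add: norm_mult norm_divide flip: times_divide_eq_right)
  also have "\<dots> \<le> norm (A_k a beta lam rho delta k) * (2 + \<bar>delta - mu beta lam delta\<bar>) / 2"
  proof (rule frac_le)
    have "eps_s delta - eps_c beta lam delta = Complex (- 2) 0 + Complex 0 (delta - mu beta lam delta)"
      by (simp add: eps_s_def eps_c_def complex_eq_iff)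
    then have "norm (eps_s delta - eps_c beta lam delta) \<le> 2 + \<bar>delta - mu beta lam delta\<bar>"
      using norm_triangle_ineq[of "Complex (- 2) 0" "Complex 0 (delta - mu beta lam delta)"]
      by (simp add: cmod_def)
    then show "norm (A_k a beta lam rho delta k) * norm (eps_s delta - eps_c beta lam delta)
        \<le> norm (A_k a beta lam rho delta k) * (2 + \<bar>delta - mu beta lam delta\<bar>)"
      by (intro mult_left_mono) auto
    show "2 \<le> 2 * norm (eps_s delta)"
      by (simp add: eps_s_def cmod_def)
  qed auto
  finally show ?thesis .
qed (simp add: C_k_def)

lemma measurable_rho_compose:
  assumes "(\<lambda>(x, y). rho x y) \<in> borel_measurable (lborel :: (real \<times> real) measure)"
    and "f \<in> borel_measurable M" "g \<in> borel_measurable M"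
  shows "(\<lambda>x. rho (f x) (g x)) \<in> borel_measurable M"
proof -
  have "(\<lambda>(x, y). rho x y) \<in> borel_measurable (borel \<Otimes>\<^sub>M borel)"
    using assms(1) by (simp add: borel_prod)
  from measurable_compose[OF measurable_Pair[OF assms(2,3)] this] show ?thesis
    by simp
qed

lemma borel_measurable_I_k:
  assumes "(\<lambda>(x, y). rho x y) \<in> borel_measurable (lborel :: (real \<times> real) measure)"
  shows "I_k rho \<in> borel_measurable borel"
proof -
  note [measurable (raw)] = measurable_rho_compose[OF assms]
  show ?thesis
    unfolding I_k_def[abs_def] rho_hat_def set_lebesgue_integral_def by measurable
qed

lemma borel_measurable_B_k_C_k:
  assumes "(\<lambda>(x, y). rho x y) \<in> borel_measurable (lborel :: (real \<times> real) measure)"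
  shows "(\<lambda>k. B_k a beta lam rho delta k) \<in> borel_measurable borel"
    and "(\<lambda>k. C_k a beta lam rho delta k) \<in> borel_measurable borel"
proof -
  note [measurable] = borel_measurable_I_k[OF assms]
  have [measurable]: "(\<lambda>k. A_k a beta lam rho delta k) \<in> borel_measurable borel"
    unfolding A_k_def psi_p_def psi_m_def Let_def by measurable
  show "(\<lambda>k. B_k a beta lam rho delta k) \<in> borel_measurable borel"
    unfolding B_k_def by measurable
  show "(\<lambda>k. C_k a beta lam rho delta k) \<in> borel_measurable borel"
    unfolding C_k_def by measurable
qed

section \<open>The charge density\<close>

lemma norm_rho_hat_le: "ennreal (norm (rho_hat rho s k)) \<le> (\<integral>\<^sup>+y. ennreal \<bar>rho s y\<bar> \<partial>lborel)"
proof -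
  have "ennreal (norm (rho_hat rho s k)) \<le> (\<integral>\<^sup>+y. norm (of_real (rho s y) * cis (- (k * y))) \<partial>lborel)"
    unfolding rho_hat_def by (rule ennreal_norm_integral_le)
  then show ?thesis
    by (simp add: norm_mult)
qed

lemma rho_nonzero_imp_in_supp: "rho x y \<noteq> 0 \<Longrightarrow> (x, y) \<in> supp rho"
  unfolding supp_def by (rule closure_subset[THEN subsetD]) simp

definition I_k_integrand :: "(real \<Rightarrow> real \<Rightarrow> real) \<Rightarrow> real \<Rightarrow> real \<times> real \<Rightarrow> complex" where
  "I_k_integrand rho k p = indicator {d0 rho..d1 rho} (fst p) *\<^sub>R
     (of_real (rho (fst p) (snd p)) * cis (- (k * snd p)) * of_real (exp (- \<bar>k\<bar> * fst p)))"

context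
  fixes a :: real and rho :: "real \<Rightarrow> real \<Rightarrow> real"
  assumes inP: "in_P a rho"
begin

lemma in_P_borel_measurable: "(\<lambda>(x, y). rho x y) \<in> borel_measurable (lborel :: (real \<times> real) measure)"
  using inP unfolding in_P_def by blast

lemma in_P_borel_measurable_pair: "(\<lambda>p. rho (fst p) (snd p)) \<in> borel_measurable (lborel \<Otimes>\<^sub>M lborel)"
  using in_P_borel_measurable by (simp add: lborel_prod case_prod_beta')

lemma in_P_supp_fst_bounds:
  assumes "(x, y) \<in> supp rho"
  shows "d0 rho \<le> x \<and> x \<le> d1 rho"
proof -
  have "bounded (fst ` supp rho)"
    using inP unfolding in_P_def by (intro compact_imp_bounded compact_continuous_image continuous_intros) auto
  moreover have "x \<in> fst ` supp rho"
    using assms by force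
  ultimately show ?thesis
    unfolding d0_def d1_def by (auto intro: cInf_lower cSup_upper bounded_imp_bdd_below bounded_imp_bdd_above)
qed

lemma in_P_d0_le_d1: "d0 rho \<le> d1 rho"
proof -
  have "supp rho \<noteq> {}"
    using inP unfolding in_P_def by auto
  then show ?thesis
    using in_P_supp_fst_bounds by fastforce
qed

lemma in_P_supp_snd_bounded: "\<exists>Y \<ge> 0. \<forall>x y. (x, y) \<in> supp rho \<longrightarrow> \<bar>y\<bar> \<le> Y"
proof -
  have "bounded (supp rho)"
    using inP unfolding in_P_def by (auto intro: compact_imp_bounded)
  then obtain B where B: "\<And>p. p \<in> supp rho \<Longrightarrow> norm p \<le> B"
    by (auto simp: bounded_iff)
  have "\<bar>y\<bar> \<le> max B 0" if "(x, y) \<in> supp rho" for x y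
  proof -
    have "\<bar>y\<bar> \<le> norm (x, y)"
      by (simp add: norm_Pair real_le_rsqrt)
    then show ?thesis
      using B[OF that] by simp
  qed
  then show ?thesis
    by (intro exI[of _ "max B 0"]) auto
qed

lemma in_P_nn_integral_abs_finite:
  "(\<integral>\<^sup>+p. ennreal \<bar>rho (fst p) (snd p)\<bar> \<partial>(lborel \<Otimes>\<^sub>M lborel)) < \<infinity>"
proof -
  obtain C where C: "AE p in (lborel :: (real \<times> real) measure). \<bar>(case p of (x, y) \<Rightarrow> rho x y)\<bar> \<le> C"
    using inP unfolding in_P_def by blast
  have "(\<integral>\<^sup>+p. ennreal \<bar>rho (fst p) (snd p)\<bar> \<partial>(lborel \<Otimes>\<^sub>M lborel))
      = (\<integral>\<^sup>+p. ennreal \<bar>rho (fst p) (snd p)\<bar> \<partial>lborel)"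
    by (simp add: lborel_prod)
  also have "\<dots> \<le> (\<integral>\<^sup>+p. ennreal (max C 0) * indicator (supp rho) p \<partial>lborel)"
    using C
  proof (intro nn_integral_mono_AE, eventually_elim)
    case (elim p)
    then show ?case
      using rho_nonzero_imp_in_supp[of rho "fst p" "snd p"]
      by (cases "p \<in> supp rho") (auto simp: case_prod_beta' intro!: ennreal_leI)
  qed
  also have "\<dots> = ennreal (max C 0) * emeasure lborel (supp rho)"
    by (intro nn_integral_cmult_indicator) (simp add: supp_def borel_closed)
  also have "\<dots> < \<infinity>"
    using inP unfolding in_P_def by (simp add: ennreal_mult_less_top)
  finally show ?thesis .
qed

lemma in_P_integrable: "integrable (lborel \<Otimes>\<^sub>M lborel) (\<lambda>p. rho (fst p) (snd p))"
  using in_P_borel_measurable_pair in_P_nn_integral_abs_finite by (intro integrableI_bounded) auto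

lemma in_P_integral_eq_0: "integral\<^sup>L (lborel \<Otimes>\<^sub>M lborel) (\<lambda>p. rho (fst p) (snd p)) = 0"
  using inP unfolding in_P_def by (simp add: lborel_prod case_prod_beta')

lemma norm_I_k_le_exp: "\<exists>R \<ge> 0. \<forall>k. norm (I_k rho k) \<le> R * exp (- \<bar>k\<bar> * d0 rho)"
proof -
  note [measurable (raw)] = measurable_rho_compose[OF in_P_borel_measurable]
  define Rn where "Rn = (\<integral>\<^sup>+s. \<integral>\<^sup>+y. ennreal \<bar>rho s y\<bar> \<partial>lborel \<partial>lborel)"
  have "Rn = (\<integral>\<^sup>+p. ennreal \<bar>rho (fst p) (snd p)\<bar> \<partial>(lborel \<Otimes>\<^sub>M lborel))"
    unfolding Rn_def using in_P_borel_measurable_pair by (subst lborel.nn_integral_fst[symmetric]) auto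
  then have "Rn < \<infinity>"
    using in_P_nn_integral_abs_finite by simp
  have "norm (I_k rho k) \<le> enn2real Rn * exp (- \<bar>k\<bar> * d0 rho)" for k
  proof -
    have "ennreal (norm (I_k rho k))
        \<le> (\<integral>\<^sup>+s. norm (indicator {d0 rho..d1 rho} s *\<^sub>R (rho_hat rho s k * of_real (exp (- \<bar>k\<bar> * s)))) \<partial>lborel)"
      unfolding I_k_def set_lebesgue_integral_def by (rule ennreal_norm_integral_le)
    also have "\<dots> \<le> (\<integral>\<^sup>+s. ennreal (exp (- \<bar>k\<bar> * d0 rho)) * (\<integral>\<^sup>+y. ennreal \<bar>rho s y\<bar> \<partial>lborel) \<partial>lborel)"
    proof (intro nn_integral_mono)
      fix s
      have "exp (- \<bar>k\<bar> * s) \<le> exp (- \<bar>k\<bar> * d0 rho)" if "d0 rho \<le> s"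
        using that by (auto intro!: mult_left_mono)
      with norm_rho_hat_le[of rho s k] have "ennreal (exp (- \<bar>k\<bar> * s)) * ennreal (norm (rho_hat rho s k))
          \<le> ennreal (exp (- \<bar>k\<bar> * d0 rho)) * (\<integral>\<^sup>+y. ennreal \<bar>rho s y\<bar> \<partial>lborel)" if "d0 rho \<le> s"
        using that by (intro mult_mono) auto
      then show "ennreal (norm (indicator {d0 rho..d1 rho} s *\<^sub>R (rho_hat rho s k * of_real (exp (- \<bar>k\<bar> * s)))))
          \<le> ennreal (exp (- \<bar>k\<bar> * d0 rho)) * (\<integral>\<^sup>+y. ennreal \<bar>rho s y\<bar> \<partial>lborel)"
        by (cases "s \<in> {d0 rho..d1 rho}") (auto simp: norm_mult ennreal_mult mult.commute)
    qed
    also have "\<dots> = ennreal (exp (- \<bar>k\<bar> * d0 rho)) * Rn"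
      unfolding Rn_def by (rule nn_integral_cmult) measurable
    also have "\<dots> = ennreal (enn2real Rn * exp (- \<bar>k\<bar> * d0 rho))"
      using \<open>Rn < \<infinity>\<close> by (simp add: ennreal_mult mult.commute ennreal_enn2real_if)
    finally show ?thesis
      by (simp add: ennreal_le_iff)
  qed
  then show ?thesis
    by (intro exI[of _ "enn2real Rn"]) auto
qed

lemma norm_exp_cis_sub_one_le:
  assumes "0 \<le> s"
  shows "norm (of_real (exp (- \<bar>k\<bar> * s)) * cis (- (k * y)) - 1) \<le> \<bar>k\<bar> * (\<bar>y\<bar> + s)"
proof -
  have "of_real (exp (- \<bar>k\<bar> * s)) * cis (- (k * y)) - 1
      = (cis (- (k * y)) - 1) * of_real (exp (- \<bar>k\<bar> * s)) + of_real (exp (- \<bar>k\<bar> * s) - 1)"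
    by (simp add: algebra_simps)
  moreover have "norm (cis (- (k * y)) - 1) \<le> \<bar>k\<bar> * \<bar>y\<bar>"
    using iexp_approx1[of "- (k * y)" 0] by (simp add: cis_conv_exp abs_mult)
  moreover have "0 < exp (- \<bar>k\<bar> * s)" "exp (- \<bar>k\<bar> * s) \<le> 1" "1 - \<bar>k\<bar> * s \<le> exp (- \<bar>k\<bar> * s)"
    using assms exp_ge_add_one_self[of "- \<bar>k\<bar> * s"] by auto
  ultimately show ?thesis
    using norm_triangle_ineq[of "(cis (- (k * y)) - 1) * of_real (exp (- \<bar>k\<bar> * s))" "of_real (exp (- \<bar>k\<bar> * s) - 1)"]
      mult_mono[of "norm (cis (- (k * y)) - 1)" "\<bar>k\<bar> * \<bar>y\<bar>" "exp (- \<bar>k\<bar> * s)" 1]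
    by (simp add: norm_mult del: of_real_diff) (smt (verit) distrib_left mult_nonneg_nonneg abs_ge_zero)
qed

lemma integrable_I_k_integrand:
  assumes d0: "d0 rho \<ge> 0"
  shows "integrable (lborel \<Otimes>\<^sub>M lborel) (I_k_integrand rho k)"
proof (rule Bochner_Integration.integrable_bound[OF integrable_abs[OF in_P_integrable]])
  show "I_k_integrand rho k \<in> borel_measurable (lborel \<Otimes>\<^sub>M lborel)"
    using in_P_borel_measurable_pair unfolding I_k_integrand_def by measurable
  have "norm (I_k_integrand rho k p) \<le> \<bar>rho (fst p) (snd p)\<bar>" for p
    using d0 by (cases "fst p \<in> {d0 rho..d1 rho}") (auto simp: I_k_integrand_def norm_mult mult_left_le)
  then show "AE p in lborel \<Otimes>\<^sub>M lborel. norm (I_k_integrand rho k p) \<le> norm \<bar>rho (fst p) (snd p)\<bar>"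
    by simp
qed

lemma I_k_eq_integral_pair:
  assumes "d0 rho \<ge> 0"
  shows "I_k rho k = integral\<^sup>L (lborel \<Otimes>\<^sub>M lborel) (I_k_integrand rho k)"
  using integrable_I_k_integrand[OF assms]
  by (subst lborel_pair.integral_fst'[symmetric])
    (auto simp: I_k_def set_lebesgue_integral_def rho_hat_def I_k_integrand_def intro!: Bochner_Integration.integral_cong)

lemma norm_I_k_integrand_sub_le:
  assumes d0: "d0 rho \<ge> 0" and Y: "\<And>x y. (x, y) \<in> supp rho \<Longrightarrow> \<bar>y\<bar> \<le> Y"
  shows "norm (I_k_integrand rho k p - of_real (rho (fst p) (snd p))) \<le> \<bar>k\<bar> * (Y + d1 rho) * \<bar>rho (fst p) (snd p)\<bar>"
proof (cases "rho (fst p) (snd p) = 0")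
  case False
  then have "p \<in> supp rho"
    using rho_nonzero_imp_in_supp[of rho "fst p" "snd p"] by simp
  then have p: "d0 rho \<le> fst p" "fst p \<le> d1 rho" "\<bar>snd p\<bar> \<le> Y"
    using in_P_supp_fst_bounds[of "fst p" "snd p"] Y[of "fst p" "snd p"] by auto
  then have "I_k_integrand rho k p - of_real (rho (fst p) (snd p))
      = of_real (rho (fst p) (snd p)) * (of_real (exp (- \<bar>k\<bar> * fst p)) * cis (- (k * snd p)) - 1)"
    by (simp add: I_k_integrand_def algebra_simps)
  then have "norm (I_k_integrand rho k p - of_real (rho (fst p) (snd p)))
      = \<bar>rho (fst p) (snd p)\<bar> * norm (of_real (exp (- \<bar>k\<bar> * fst p)) * cis (- (k * snd p)) - 1)"
    by (simp add: norm_mult)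
  also have "\<dots> \<le> \<bar>rho (fst p) (snd p)\<bar> * (\<bar>k\<bar> * (\<bar>snd p\<bar> + fst p))"
    using d0 p by (intro mult_left_mono norm_exp_cis_sub_one_le) auto
  also have "\<dots> \<le> \<bar>rho (fst p) (snd p)\<bar> * (\<bar>k\<bar> * (Y + d1 rho))"
    using p by (intro mult_left_mono) auto
  finally show ?thesis
    by (simp add: mult_ac)
qed (simp add: I_k_integrand_def)

text \<open>The neutrality of \<open>\<rho>\<close> makes \<open>I_k\<close> vanish at \<open>k = 0\<close>; this keeps the coefficients of the potential
  integrable near \<open>k = 0\<close> for fixed \<open>\<delta>\<close>.\<close>

lemma norm_I_k_le_abs:
  assumes d0: "d0 rho \<ge> 0"
  shows "\<exists>C \<ge> 0. \<forall>k. norm (I_k rho k) \<le> C * \<bar>k\<bar>"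
proof -
  obtain Y where Y: "Y \<ge> 0" "\<And>x y. (x, y) \<in> supp rho \<Longrightarrow> \<bar>y\<bar> \<le> Y"
    using in_P_supp_snd_bounded by blast
  define C where "C = (Y + d1 rho) * (LINT p|(lborel \<Otimes>\<^sub>M lborel). \<bar>rho (fst p) (snd p)\<bar>)"
  have "norm (I_k rho k) \<le> C * \<bar>k\<bar>" for k
  proof -
    have "I_k rho k = integral\<^sup>L (lborel \<Otimes>\<^sub>M lborel) (I_k_integrand rho k)
        - integral\<^sup>L (lborel \<Otimes>\<^sub>M lborel) (\<lambda>p. of_real (rho (fst p) (snd p)))"
      using I_k_eq_integral_pair[OF d0] in_P_integral_eq_0 by simp
    also have "\<dots> = (LINT p|(lborel \<Otimes>\<^sub>M lborel). I_k_integrand rho k p - of_real (rho (fst p) (snd p)))"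
      using integrable_I_k_integrand[OF d0] in_P_integrable by (intro Bochner_Integration.integral_diff[symmetric]) auto
    finally have "norm (I_k rho k)
        \<le> (LINT p|(lborel \<Otimes>\<^sub>M lborel). norm (I_k_integrand rho k p - of_real (rho (fst p) (snd p))))"
      by (simp add: integral_norm_bound)
    also have "\<dots> \<le> (LINT p|(lborel \<Otimes>\<^sub>M lborel). \<bar>k\<bar> * (Y + d1 rho) * \<bar>rho (fst p) (snd p)\<bar>)"
      using integrable_I_k_integrand[OF d0] in_P_integrable norm_I_k_integrand_sub_le[OF d0 Y(2)]
      by (intro integral_mono) auto
    finally show ?thesis
      by (simp add: C_def mult_ac)
  qed
  moreover have "C \<ge> 0"
    unfolding C_def using Y d0 in_P_d0_le_d1 by (intro mult_nonneg_nonneg integral_nonneg_AE) auto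
  ultimately show ?thesis
    by blast
qed

end

section \<open>Estimates of the coefficients\<close>

lemma powr_mult_powr_le_add:
  fixes u v t :: real
  assumes "u > 0" "v > 0" "0 \<le> t" "t \<le> 1"
  shows "u powr t * v powr (1 - t) \<le> u + v"
proof -
  have "u powr t * v powr (1 - t) \<le> max u v powr t * max u v powr (1 - t)"
    using assms by (intro mult_mono powr_mono2) auto
  also have "\<dots> = max u v"
    using assms by (simp add: powr_add[symmetric])
  finally show ?thesis
    using assms by linarith
qed

lemma inverse_add_le_powr:
  fixes u q t :: real
  assumes u: "u > 0" and q: "q > 0" and t: "0 \<le> t" "t \<le> 1"
  shows "1 / (u + q) \<le> u powr (- t) * q powr (t - 1)"
proof -
  have "1 / (u + q) \<le> 1 / (u powr t * q powr (1 - t))"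
    using powr_mult_powr_le_add[OF u q t] u q by (intro divide_left_mono) auto
  also have "\<dots> = u powr (- t) * q powr (t - 1)"
    using u q by (simp add: powr_minus divide_inverse inverse_mult_distrib flip: powr_minus)
  finally show ?thesis .
qed

lemma divide_le_exp_of_two_bounds:
  fixes I K d C R :: real
  assumes K: "K > 0" and d: "d \<ge> 0" and C: "C \<ge> 0" and R: "R \<ge> 0"
    and I: "I \<le> R * exp (- K * d)" "I \<le> C * K"
  shows "I / K \<le> (C * exp d + R) * exp (- K * d)"
proof (cases "K \<le> 1")
  case True
  have "I / K \<le> C"
    using I(2) K by (simp add: pos_divide_le_eq)
  also have "\<dots> \<le> C * (exp d * exp (- K * d))"
  proof -
    have "1 \<le> exp ((1 - K) * d)"
      using True d by simp
    then show ?thesis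
      using C by (simp add: mult_le_cancel_left1 algebra_simps flip: exp_add)
  qed
  also have "\<dots> \<le> (C * exp d + R) * exp (- K * d)"
    using R by (simp add: algebra_simps)
  finally show ?thesis .
next
  case False
  have "I / K \<le> max I 0"
  proof (cases "I \<ge> 0")
    case True
    then have "I * 1 \<le> I * K"
      using False by (intro mult_left_mono) auto
    then show ?thesis
      using K by (simp add: pos_divide_le_eq)
  qed (use K in \<open>simp add: divide_neg_pos less_imp_le\<close>)
  moreover have "0 \<le> R * exp (- K * d)" "0 \<le> C * exp d * exp (- K * d)"
    using C R by auto
  ultimately show ?thesis
    using I(1) by (auto simp: algebra_simps le_max_iff_disj)
qed

context
  fixes a beta lam delta :: real and rho :: "real \<Rightarrow> real \<Rightarrow> real"
  assumes delta: "0 < delta" "delta \<le> 1" and mu: "mu beta lam delta \<ge> 0"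
begin

lemma abs_mult_norm_B_k_exp_le:
  assumes x: "x \<le> a" and t: "0 \<le> t" "t \<le> 1"
    and R: "norm (I_k rho k) \<le> R * exp (- \<bar>k\<bar> * d0 rho)"
  defines "s \<equiv> delta + mu beta lam delta"
  shows "\<bar>k\<bar> * norm (B_k a beta lam rho delta k) * exp (\<bar>k\<bar> * x)
    \<le> 2 * R * s * (delta * s) powr (- t) * exp (- (d0 rho - 3 * a + 2 * a * t) * \<bar>k\<bar>)"
proof -
  define q where "q = exp (- 2 * \<bar>k\<bar> * a)"
  have s: "s > 0" "delta * s > 0" and q: "q > 0"
    using delta mu by (auto simp: s_def q_def)
  have R0: "R \<ge> 0"
    using order_trans[OF norm_ge_zero R] by (simp add: zero_le_mult_iff)
  have A: "\<bar>k\<bar> * norm (A_k a beta lam rho delta k) \<le> 4 * norm (I_k rho k) / (delta * s + 3 * q)"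
    using abs_mult_norm_A_k_le[OF delta mu, of k a rho]
    by (simp add: s_def q_def power2_eq_square mult_ac flip: exp_add)
  have "norm (B_k a beta lam rho delta k) \<le> norm (A_k a beta lam rho delta k) * (s / 2)"
    using norm_B_k_le[OF delta(1) mu] by (simp add: s_def)
  moreover have "exp (\<bar>k\<bar> * x) \<le> exp (\<bar>k\<bar> * a)"
    using x by (simp add: mult_left_mono)
  ultimately have "\<bar>k\<bar> * norm (B_k a beta lam rho delta k) * exp (\<bar>k\<bar> * x)
      \<le> \<bar>k\<bar> * (norm (A_k a beta lam rho delta k) * (s / 2)) * exp (\<bar>k\<bar> * a)"
    using s by (intro mult_mono mult_left_mono) auto
  also have "\<dots> = \<bar>k\<bar> * norm (A_k a beta lam rho delta k) * (s / 2) * exp (\<bar>k\<bar> * a)"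
    by (simp add: mult_ac)
  also have "\<dots> \<le> 4 * norm (I_k rho k) / (delta * s + 3 * q) * (s / 2) * exp (\<bar>k\<bar> * a)"
    using A s by (intro mult_right_mono) auto
  also have "\<dots> \<le> 4 * norm (I_k rho k) / (delta * s + q) * (s / 2) * exp (\<bar>k\<bar> * a)"
    using s q by (intro mult_right_mono divide_left_mono) auto
  also have "\<dots> = 2 * norm (I_k rho k) * s * exp (\<bar>k\<bar> * a) * (1 / (delta * s + q))"
    by (simp add: field_simps)
  also have "\<dots> \<le> 2 * (R * exp (- \<bar>k\<bar> * d0 rho)) * s * exp (\<bar>k\<bar> * a) * (1 / (delta * s + q))"
    using R s q by (intro mult_right_mono) auto
  also have "\<dots> \<le> 2 * (R * exp (- \<bar>k\<bar> * d0 rho)) * s * exp (\<bar>k\<bar> * a) * ((delta * s) powr (- t) * q powr (t - 1))"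
    using R0 s q t by (intro mult_left_mono inverse_add_le_powr) auto
  also have "\<dots> = 2 * R * s * (delta * s) powr (- t) * exp (- (d0 rho - 3 * a + 2 * a * t) * \<bar>k\<bar>)"
    unfolding q_def by (simp add: powr_def algebra_simps flip: exp_add)
  finally show ?thesis .
qed

lemma abs_mult_norm_C_k_exp_le:
  assumes x: "a / 2 \<le> x" and dm: "\<bar>delta - mu beta lam delta\<bar> \<le> 1"
    and R: "norm (I_k rho k) \<le> R * exp (- \<bar>k\<bar> * d0 rho)"
  shows "\<bar>k\<bar> * norm (C_k a beta lam rho delta k) * exp (- \<bar>k\<bar> * x)
    \<le> 2 * R * exp (- (d0 rho - 3 * a / 2) * \<bar>k\<bar>)"
proof -
  define s where "s = delta + mu beta lam delta"
  define q where "q = exp (- 2 * \<bar>k\<bar> * a)"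
  have s: "delta * s > 0" and q: "q > 0"
    using delta mu by (auto simp: s_def q_def)
  have A: "\<bar>k\<bar> * norm (A_k a beta lam rho delta k) \<le> 4 * norm (I_k rho k) / (delta * s + 3 * q)"
    using abs_mult_norm_A_k_le[OF delta mu, of k a rho]
    by (simp add: s_def q_def power2_eq_square mult_ac flip: exp_add)
  have "norm (C_k a beta lam rho delta k) \<le> norm (A_k a beta lam rho delta k) * (2 + \<bar>delta - mu beta lam delta\<bar>) / 2"
    by (rule norm_C_k_le)
  also have "\<dots> \<le> 3 / 2 * norm (A_k a beta lam rho delta k)"
    using mult_left_mono[OF add_left_mono[OF dm, of 2] norm_ge_zero[of "A_k a beta lam rho delta k"]] by simp
  finally have "norm (C_k a beta lam rho delta k) \<le> 3 / 2 * norm (A_k a beta lam rho delta k)" .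
  moreover have "exp (- \<bar>k\<bar> * x) \<le> exp (- \<bar>k\<bar> * (a / 2))"
    using mult_left_mono[OF x abs_ge_zero[of k]] by simp
  ultimately have "\<bar>k\<bar> * norm (C_k a beta lam rho delta k) * exp (- \<bar>k\<bar> * x)
      \<le> \<bar>k\<bar> * (3 / 2 * norm (A_k a beta lam rho delta k)) * exp (- \<bar>k\<bar> * (a / 2))"
    by (intro mult_mono mult_left_mono) auto
  also have "\<dots> = 3 / 2 * (\<bar>k\<bar> * norm (A_k a beta lam rho delta k)) * exp (- \<bar>k\<bar> * (a / 2))"
    by (simp add: mult_ac)
  also have "\<dots> \<le> 3 / 2 * (4 * norm (I_k rho k) / (3 * q)) * exp (- \<bar>k\<bar> * (a / 2))"
    using A s q by (intro mult_right_mono mult_left_mono order_trans[OF A] divide_left_mono) auto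
  also have "\<dots> \<le> 2 * (R * exp (- \<bar>k\<bar> * d0 rho)) * exp (- \<bar>k\<bar> * (a / 2)) / q"
    using R q by (simp add: field_simps)
  also have "\<dots> = 2 * R * exp (- (d0 rho - 3 * a / 2) * \<bar>k\<bar>)"
    unfolding q_def by (simp add: field_simps flip: exp_add exp_diff)
  finally show ?thesis .
qed

lemma norm_A_k_le_exp:
  assumes k: "k \<noteq> 0" and d0: "d0 rho \<ge> 0" and C: "C \<ge> 0" and R: "R \<ge> 0"
    and I: "norm (I_k rho k) \<le> R * exp (- \<bar>k\<bar> * d0 rho)" "norm (I_k rho k) \<le> C * \<bar>k\<bar>"
  shows "norm (A_k a beta lam rho delta k)
    \<le> 4 / (delta * (delta + mu beta lam delta)) * ((C * exp (d0 rho) + R) * exp (- \<bar>k\<bar> * d0 rho))"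
proof -
  define L where "L = delta * (delta + mu beta lam delta)"
  have L: "L > 0"
    using delta mu by (simp add: L_def)
  have "\<bar>k\<bar> * norm (A_k a beta lam rho delta k) \<le> 4 * norm (I_k rho k) / (L + 3 * (exp (- \<bar>k\<bar> * a))\<^sup>2)"
    unfolding L_def by (rule abs_mult_norm_A_k_le[OF delta mu])
  also have "\<dots> \<le> 4 * norm (I_k rho k) / L"
    using L by (intro divide_left_mono) (auto intro!: mult_pos_pos add_pos_nonneg)
  finally have "norm (A_k a beta lam rho delta k) \<le> 4 / L * (norm (I_k rho k) / \<bar>k\<bar>)"
    using k L by (simp add: field_simps)
  also have "\<dots> \<le> 4 / L * ((C * exp (d0 rho) + R) * exp (- \<bar>k\<bar> * d0 rho))"
    using k d0 C R I L by (intro mult_left_mono divide_le_exp_of_two_bounds) auto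
  finally show ?thesis
    by (simp add: L_def)
qed

lemma decaying_modes_B_k_C_k:
  assumes rho: "(\<lambda>(x, y). rho x y) \<in> borel_measurable (lborel :: (real \<times> real) measure)"
    and d0: "d0 rho > a" "a \<ge> 0" and s: "delta + mu beta lam delta \<le> 1" and dm: "\<bar>delta - mu beta lam delta\<bar> \<le> 1"
    and C: "C \<ge> 0" and R: "R \<ge> 0"
    and I: "\<And>k. norm (I_k rho k) \<le> R * exp (- \<bar>k\<bar> * d0 rho)" "\<And>k. norm (I_k rho k) \<le> C * \<bar>k\<bar>"
  shows "decaying_modes (B_k a beta lam rho delta) (C_k a beta lam rho delta) a (d0 rho)
    (6 * (C * exp (d0 rho) + R) / (delta * (delta + mu beta lam delta)))"
proof
  define P where "P = 6 * (C * exp (d0 rho) + R) / (delta * (delta + mu beta lam delta))"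
  have P: "P \<ge> 0"
    unfolding P_def using delta mu C R by simp
  have A: "3 / 2 * norm (A_k a beta lam rho delta k) \<le> P * exp (- \<bar>k\<bar> * d0 rho)" if "k \<noteq> 0" for k
  proof -
    have "d0 rho \<ge> 0"
      using d0 by simp
    from mult_left_mono[OF norm_A_k_le_exp[OF that this C R I], of "3 / 2"]
    show ?thesis
      unfolding P_def by (simp add: algebra_simps add_divide_distrib)
  qed
  show "norm (B_k a beta lam rho delta k) \<le> P * exp (- \<bar>k\<bar> * d0 rho)" for k
  proof (cases "k = 0")
    case False
    have "norm (B_k a beta lam rho delta k) \<le> norm (A_k a beta lam rho delta k) * (delta + mu beta lam delta) / 2"
      by (rule norm_B_k_le[OF delta(1) mu])
    also have "\<dots> \<le> 3 / 2 * norm (A_k a beta lam rho delta k)"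
      using mult_left_mono[OF s norm_ge_zero[of "A_k a beta lam rho delta k"]] norm_ge_zero[of "A_k a beta lam rho delta k"]
      by linarith
    finally show ?thesis
      using A[OF False] by simp
  qed (use P in \<open>simp add: B_k_def\<close>)
  show "norm (C_k a beta lam rho delta k) \<le> P * exp (- \<bar>k\<bar> * d0 rho)" for k
  proof (cases "k = 0")
    case False
    have "norm (C_k a beta lam rho delta k) \<le> norm (A_k a beta lam rho delta k) * (2 + \<bar>delta - mu beta lam delta\<bar>) / 2"
      by (rule norm_C_k_le)
    also have "\<dots> \<le> 3 / 2 * norm (A_k a beta lam rho delta k)"
      using mult_left_mono[OF add_left_mono[OF dm, of 2] norm_ge_zero[of "A_k a beta lam rho delta k"]] by simp
    finally show ?thesis
      using A[OF False] by simp
  qed (use P in \<open>simp add: C_k_def\<close>)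
qed (use borel_measurable_B_k_C_k[OF rho] d0 in auto)

end

section \<open>The dissipation estimate\<close>

lemma E_le_nn_integral_square:
  assumes modes: "decaying_modes (B_k a beta lam rho delta) (C_k a beta lam rho delta) a d P"
    and xi: "0 < xi" "xi < a" and delta: "delta \<ge> 0"
    and h: "h \<in> borel_measurable borel"
      "\<And>x k. a - xi \<le> x \<Longrightarrow> x \<le> a \<Longrightarrow> exp_modes_weight (B_k a beta lam rho delta) (C_k a beta lam rho delta) x k \<le> h k"
  shows "E a beta lam rho xi delta \<le> ennreal (delta * xi / pi) * (\<integral>\<^sup>+k. ennreal ((h k)\<^sup>2) \<partial>lborel)"
proof -
  define Q where "Q = ennreal (1 / pi) * (\<integral>\<^sup>+k. ennreal ((h k)\<^sup>2) \<partial>lborel)"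
  define G where "G x = (\<integral>\<^sup>+y. ennreal ((norm (vector_derivative (\<lambda>x'. V a beta lam rho delta x' y) (at x)))\<^sup>2
      + (norm (vector_derivative (\<lambda>y'. V a beta lam rho delta x y') (at y)))\<^sup>2) \<partial>lborel)" for x
  have G_le: "G x \<le> Q" if "a - xi \<le> x" "x < a" for x
    unfolding G_def Q_def using that xi h V_slab
    by (intro decaying_modes.nn_integral_gradient_square_le[OF modes]) auto
  have "AE x in lborel. x \<noteq> a"
    by (rule AE_lborel_singleton)
  then have "AE x in lborel. G x * indicator {a - xi..a} x \<le> Q * indicator {a - xi..a} x"
    by (rule AE_mp) (auto intro!: AE_I2 simp: indicator_def G_le)
  then have "(\<integral>\<^sup>+x\<in>{a - xi..a}. G x \<partial>lborel) \<le> Q * ennreal xi"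
    using xi by (auto dest!: nn_integral_mono_AE simp: nn_integral_cmult_indicator)
  then have "E a beta lam rho xi delta \<le> ennreal delta * (Q * ennreal xi)"
    unfolding E_def G_def by (auto intro: mult_left_mono)
  also have "\<dots> = ennreal (delta * xi / pi) * (\<integral>\<^sup>+k. ennreal ((h k)\<^sup>2) \<partial>lborel)"
  proof -
    have "ennreal (delta * xi / pi) = ennreal delta * (ennreal xi * ennreal (1 / pi))"
      using delta xi by (simp add: ennreal_mult'[symmetric])
    then show ?thesis
      unfolding Q_def by (simp add: mult_ac)
  qed
  finally show ?thesis .
qed

lemma nn_integral_square_exp_sum_le:
  assumes c: "c > 0" "c' > 0"
  shows "(\<integral>\<^sup>+k. ennreal ((u * exp (- c * \<bar>k\<bar>) + v * exp (- c' * \<bar>k\<bar>))\<^sup>2) \<partial>lborel)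
    \<le> ennreal (2 * u\<^sup>2 / c + 2 * v\<^sup>2 / c')"
proof -
  have "(\<integral>\<^sup>+k. ennreal ((u * exp (- c * \<bar>k\<bar>) + v * exp (- c' * \<bar>k\<bar>))\<^sup>2) \<partial>lborel)
      \<le> (\<integral>\<^sup>+k. ennreal (2 * u\<^sup>2) * ennreal (exp (- (2 * c) * \<bar>k\<bar>))
        + ennreal (2 * v\<^sup>2) * ennreal (exp (- (2 * c') * \<bar>k\<bar>)) \<partial>lborel)"
  proof (intro nn_integral_mono)
    fix k :: real
    have "(u * exp (- c * \<bar>k\<bar>) + v * exp (- c' * \<bar>k\<bar>))\<^sup>2
        \<le> 2 * (u * exp (- c * \<bar>k\<bar>))\<^sup>2 + 2 * (v * exp (- c' * \<bar>k\<bar>))\<^sup>2"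
      by (smt (verit) sum_squares_bound power2_sum)
    also have "\<dots> = 2 * u\<^sup>2 * exp (- (2 * c) * \<bar>k\<bar>) + 2 * v\<^sup>2 * exp (- (2 * c') * \<bar>k\<bar>)"
      by (simp add: power_mult_distrib power2_eq_square algebra_simps flip: exp_add)
    finally show "ennreal ((u * exp (- c * \<bar>k\<bar>) + v * exp (- c' * \<bar>k\<bar>))\<^sup>2)
        \<le> ennreal (2 * u\<^sup>2) * ennreal (exp (- (2 * c) * \<bar>k\<bar>)) + ennreal (2 * v\<^sup>2) * ennreal (exp (- (2 * c') * \<bar>k\<bar>))"
      by (simp add: ennreal_mult[symmetric] ennreal_plus[symmetric] del: ennreal_plus)
  qed
  also have "\<dots> = ennreal (2 * u\<^sup>2) * (\<integral>\<^sup>+k. ennreal (exp (- (2 * c) * \<bar>k\<bar>)) \<partial>lborel)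
      + ennreal (2 * v\<^sup>2) * (\<integral>\<^sup>+k. ennreal (exp (- (2 * c') * \<bar>k\<bar>)) \<partial>lborel)"
    by (simp add: nn_integral_add nn_integral_cmult)
  also have "\<dots> \<le> ennreal (2 * u\<^sup>2) * ennreal (2 / (2 * c)) + ennreal (2 * v\<^sup>2) * ennreal (2 / (2 * c'))"
    using c by (intro add_mono mult_left_mono nn_integral_exp_neg_abs_le) auto
  also have "\<dots> = ennreal (2 * u\<^sup>2 / c + 2 * v\<^sup>2 / c')"
    using c by (simp add: ennreal_mult[symmetric] ennreal_plus[symmetric] del: ennreal_plus)
  finally show ?thesis .
qed

lemma E_le_explicit_bound:
  assumes inP: "in_P a rho" and a: "a > 0" and xi: "0 < xi" "xi \<le> a / 2"
    and d0: "d0 rho > 3 * a / 2" and t: "0 \<le> t" "t \<le> 1" "d0 rho - 3 * a + 2 * a * t > 0"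
    and C: "C \<ge> 0" and R: "R \<ge> 0"
    and I: "\<And>k. norm (I_k rho k) \<le> R * exp (- \<bar>k\<bar> * d0 rho)" "\<And>k. norm (I_k rho k) \<le> C * \<bar>k\<bar>"
    and delta: "0 < delta" "delta \<le> 1" and mu: "mu beta lam delta \<ge> 0"
    and s: "delta + mu beta lam delta \<le> 1" and dm: "\<bar>delta - mu beta lam delta\<bar> \<le> 1"
  shows "E a beta lam rho xi delta \<le> ennreal (delta * xi / pi *
    (8 * R\<^sup>2 * (delta + mu beta lam delta)\<^sup>2 * (delta * (delta + mu beta lam delta)) powr (- 2 * t)
      / (d0 rho - 3 * a + 2 * a * t) + 8 * R\<^sup>2 / (d0 rho - 3 * a / 2)))"
proof -
  define s where "s = delta + mu beta lam delta"
  define u where "u = 2 * R * s * (delta * s) powr (- t)"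
  define h where "h k = u * exp (- (d0 rho - 3 * a + 2 * a * t) * \<bar>k\<bar>) + 2 * R * exp (- (d0 rho - 3 * a / 2) * \<bar>k\<bar>)"
    for k :: real
  have modes: "decaying_modes (B_k a beta lam rho delta) (C_k a beta lam rho delta) a (d0 rho)
      (6 * (C * exp (d0 rho) + R) / (delta * (delta + mu beta lam delta)))"
    using in_P_borel_measurable[OF inP] d0 a s dm C R I by (intro decaying_modes_B_k_C_k[OF delta mu]) auto
  have "exp_modes_weight (B_k a beta lam rho delta) (C_k a beta lam rho delta) x k \<le> h k"
    if "a - xi \<le> x" "x \<le> a" for x k
    using abs_mult_norm_B_k_exp_le[OF delta mu, where x=x and a=a and t=t and R=R and rho=rho and k=k]
      abs_mult_norm_C_k_exp_le[OF delta mu, where x=x and a=a and R=R and rho=rho and k=k]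
      that xi t I dm
    unfolding exp_modes_weight_def h_def u_def s_def by (simp add: distrib_left mult.assoc)
  then have "E a beta lam rho xi delta \<le> ennreal (delta * xi / pi) * (\<integral>\<^sup>+k. ennreal ((h k)\<^sup>2) \<partial>lborel)"
    using xi a delta by (intro E_le_nn_integral_square[OF modes]) (auto simp: h_def)
  also have "\<dots> \<le> ennreal (delta * xi / pi) *
      ennreal (2 * u\<^sup>2 / (d0 rho - 3 * a + 2 * a * t) + 2 * (2 * R)\<^sup>2 / (d0 rho - 3 * a / 2))"
    unfolding h_def using t d0 by (intro mult_left_mono nn_integral_square_exp_sum_le) auto
  also have "\<dots> = ennreal (delta * xi / pi *
      (2 * u\<^sup>2 / (d0 rho - 3 * a + 2 * a * t) + 2 * (2 * R)\<^sup>2 / (d0 rho - 3 * a / 2)))"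
    using delta xi by (simp add: ennreal_mult'[symmetric])
  also have "2 * u\<^sup>2 = 8 * R\<^sup>2 * s\<^sup>2 * (delta * s) powr (- 2 * t)"
    unfolding u_def by (simp add: power_mult_distrib power2_eq_square powr_add[symmetric])
  also have "2 * (2 * R)\<^sup>2 = 8 * R\<^sup>2"
    by simp
  finally show ?thesis
    unfolding s_def .
qed

section \<open>The limit of vanishing loss\<close>

lemma tendsto_powr_at_right_0: "e > 0 \<Longrightarrow> ((\<lambda>x::real. x powr e) \<longlongrightarrow> 0) (at_right 0)"
  by (rule tendsto_zero_powrI[OF tendsto_ident_at tendsto_const]) (auto simp: eventually_at_filter)

lemma delta_add_mu_le_powr:
  assumes "beta > 0" "0 < delta" "delta < 1"
  shows "delta + mu beta lam delta \<le> (2 + \<bar>lam\<bar>) * delta powr (min 1 beta)"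
proof -
  have "delta = delta powr 1"
    using assms by simp
  also have "\<dots> \<le> delta powr (min 1 beta)"
    using assms by (intro powr_mono') auto
  finally have "delta \<le> delta powr (min 1 beta)" .
  moreover have "delta powr beta \<le> delta powr (min 1 beta)"
    using assms by (intro powr_mono') auto
  moreover have "lam * delta powr beta \<le> \<bar>lam\<bar> * delta powr beta"
    by (simp add: mult_right_mono)
  ultimately have "2 * delta + lam * delta powr beta \<le> 2 * delta powr (min 1 beta) + \<bar>lam\<bar> * delta powr (min 1 beta)"
    using mult_left_mono[of "delta powr beta" "delta powr (min 1 beta)" "\<bar>lam\<bar>"] by auto
  then show ?thesis
    by (simp add: mu_def algebra_simps)
qed

lemma eventually_mult_powr_less_1:
  fixes c e :: real
  assumes "e > 0"
  shows "\<forall>\<^sub>F delta in at_right 0. c * delta powr e < 1"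
  using tendsto_mult[OF tendsto_const[of c] tendsto_powr_at_right_0[OF assms]]
  by (intro order_tendstoD(2)) auto

lemma eventually_in_unit_interval: "\<forall>\<^sub>F delta::real in at_right 0. 0 < delta \<and> delta < 1"
  by (auto simp: eventually_at_right_field intro: exI[of _ 1])

lemma eventually_mu_nonneg:
  assumes feasible: "feasible beta lam"
  shows "\<forall>\<^sub>F delta in at_right 0. mu beta lam delta \<ge> 0"
proof (cases "lam \<ge> 0 \<or> beta = 1")
  case True
  show ?thesis
    using eventually_in_unit_interval
  proof eventually_elim
    case (elim delta)
    have "0 \<le> delta * (1 + lam) \<or> 0 \<le> lam"
      using True feasible elim mult_nonneg_nonneg[of delta "1 + lam"] by (auto simp: feasible_def)
    then show ?case
      using elim True by (auto simp: mu_def algebra_simps)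
  qed
next
  case False
  then have "beta - 1 > 0"
    using feasible by (auto simp: feasible_def)
  show ?thesis
    using eventually_in_unit_interval eventually_mult_powr_less_1[OF \<open>beta - 1 > 0\<close>, of "\<bar>lam\<bar>"]
  proof eventually_elim
    case (elim delta)
    have "\<bar>lam * delta powr beta\<bar> = delta * (\<bar>lam\<bar> * delta powr (beta - 1))"
      using elim by (simp add: abs_mult powr_diff)
    also have "\<dots> \<le> delta"
      using elim by (intro mult_left_le) auto
    finally show ?case
      by (simp add: mu_def)
  qed
qed

lemma eventually_loss_conditions:
  assumes beta: "beta > 0" and feasible: "feasible beta lam"
  shows "\<forall>\<^sub>F delta in at_right 0. 0 < delta \<and> delta \<le> 1 \<and> mu beta lam delta \<ge> 0
    \<and> \<bar>delta - mu beta lam delta\<bar> \<le> 1 \<and> delta + mu beta lam delta \<le> 1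
    \<and> delta + mu beta lam delta \<le> (2 + \<bar>lam\<bar>) * delta powr (min 1 beta)"
proof -
  have "min 1 beta > 0"
    using beta by simp
  show ?thesis
    using eventually_in_unit_interval eventually_mu_nonneg[OF feasible]
      eventually_mult_powr_less_1[OF beta, of "\<bar>lam\<bar>"]
      eventually_mult_powr_less_1[OF \<open>min 1 beta > 0\<close>, of "2 + \<bar>lam\<bar>"]
  proof eventually_elim
    case (elim delta)
    then show ?case
      using delta_add_mu_le_powr[OF beta, of delta lam] by (auto simp: mu_def abs_mult)
  qed
qed

lemma mult_square_powr_le_powr:
  fixes delta s K g t :: real
  assumes delta: "delta > 0" and s: "s > 0" "s \<le> K * delta powr g" and t: "0 \<le> t" "t \<le> 1"
  shows "delta * s\<^sup>2 * (delta * s) powr (- 2 * t) \<le> K powr (2 - 2 * t) * delta powr (1 + 2 * g - 2 * t * (1 + g))"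
proof -
  have K: "K \<ge> 0"
    using s delta by (smt (verit) powr_gt_zero zero_le_mult_iff)
  have "delta * s\<^sup>2 * (delta * s) powr (- 2 * t) = (delta * delta powr (- 2 * t)) * (s\<^sup>2 * s powr (- 2 * t))"
    using delta s by (simp add: powr_mult mult_ac)
  also have "\<dots> = delta powr (1 - 2 * t) * s powr (2 - 2 * t)"
    using delta s powr_add[of delta 1 "- 2 * t"] powr_add[of s 2 "- 2 * t"] powr_realpow[OF s(1), of 2] by simp
  also have "\<dots> \<le> delta powr (1 - 2 * t) * (K * delta powr g) powr (2 - 2 * t)"
    using s t by (intro mult_left_mono powr_mono2) auto
  also have "\<dots> = K powr (2 - 2 * t) * delta powr (1 + 2 * g - 2 * t * (1 + g))"
    using K delta by (simp add: powr_mult powr_powr powr_add[symmetric] algebra_simps)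
  finally show ?thesis .
qed

lemma tau_ge_three_halves: "beta > 0 \<Longrightarrow> 3 / 2 \<le> tau beta"
  by (simp add: tau_def field_simps)

lemma exists_interpolation_exponent:
  assumes a: "a > 0" and beta: "beta > 0" and d: "d > tau beta * a"
  defines "g \<equiv> min 1 beta"
  shows "\<exists>t. 0 \<le> t \<and> t \<le> 1 \<and> d - 3 * a + 2 * a * t > 0 \<and> 1 + 2 * g - 2 * t * (1 + g) > 0"
proof -
  have g: "0 < g" "g \<le> 1" and tau: "tau beta = (g + 2) / (g + 1)"
    using beta by (auto simp: g_def tau_def)
  define t0 where "t0 = (3 * a - d) / (2 * a)"
  define t1 where "t1 = (1 + 2 * g) / (2 * (1 + g))"
  define t where "t = (max 0 t0 + t1) / 2"
  have "(3 * a - d) * (2 * (1 + g)) < (1 + 2 * g) * (2 * a)"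
    using d a g unfolding tau by (simp add: field_simps)
  then have "t0 < t1"
    using a g unfolding t0_def t1_def by (simp add: divide_less_eq less_divide_eq mult_ac)
  moreover have "0 < t1" "t1 < 1"
    using g by (auto simp: t1_def)
  ultimately have t: "0 \<le> t" "t0 < t" "t < t1" "t \<le> 1"
    unfolding t_def by auto
  have "d - 3 * a + 2 * a * t > 0"
    using t(2) a unfolding t0_def by (simp add: divide_less_eq mult_ac)
  moreover have "1 + 2 * g - 2 * t * (1 + g) > 0"
    using t(3) g unfolding t1_def by (simp add: less_divide_eq algebra_simps)
  ultimately show ?thesis
    using t by blast
qed

lemma E_le_powr_bound:
  assumes inP: "in_P a rho" and a: "a > 0" and xi: "0 < xi" "xi \<le> a / 2"
    and d0: "d0 rho > 3 * a / 2" and t: "0 \<le> t" "t \<le> 1" "d0 rho - 3 * a + 2 * a * t > 0"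
    and C: "C \<ge> 0" and R: "R \<ge> 0"
    and I: "\<And>k. norm (I_k rho k) \<le> R * exp (- \<bar>k\<bar> * d0 rho)" "\<And>k. norm (I_k rho k) \<le> C * \<bar>k\<bar>"
    and delta: "0 < delta" "delta \<le> 1" and mu: "mu beta lam delta \<ge> 0"
    and s: "delta + mu beta lam delta \<le> 1" and dm: "\<bar>delta - mu beta lam delta\<bar> \<le> 1"
    and K: "delta + mu beta lam delta \<le> K * delta powr g"
  shows "E a beta lam rho xi delta \<le> ennreal (xi / pi *
    (8 * R\<^sup>2 * K powr (2 - 2 * t) / (d0 rho - 3 * a + 2 * a * t) * delta powr (1 + 2 * g - 2 * t * (1 + g))
      + 8 * R\<^sup>2 / (d0 rho - 3 * a / 2) * delta))"
proof -
  define s where "s = delta + mu beta lam delta"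
  define X where "X = 8 * R\<^sup>2 * s\<^sup>2 * (delta * s) powr (- 2 * t)"
  define c1 where "c1 = d0 rho - 3 * a + 2 * a * t"
  define c2 where "c2 = d0 rho - 3 * a / 2"
  have c: "c1 > 0" "c2 > 0"
    using t d0 by (auto simp: c1_def c2_def)
  have "delta * X \<le> 8 * R\<^sup>2 * K powr (2 - 2 * t) * delta powr (1 + 2 * g - 2 * t * (1 + g))"
    using mult_left_mono[OF mult_square_powr_le_powr[of delta s K g t], of "8 * R\<^sup>2"] delta mu K t
    by (simp add: X_def s_def mult_ac)
  have "delta * xi / pi * (X / c1 + 8 * R\<^sup>2 / c2) = xi / pi * (delta * X / c1 + 8 * R\<^sup>2 * delta / c2)"
    by (simp add: field_simps)
  also have "\<dots> \<le> xi / pi * (8 * R\<^sup>2 * K powr (2 - 2 * t) * delta powr (1 + 2 * g - 2 * t * (1 + g)) / c1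
      + 8 * R\<^sup>2 * delta / c2)"
    using \<open>delta * X \<le> _\<close> xi c by (intro mult_left_mono add_right_mono divide_right_mono) auto
  finally have "ennreal (delta * xi / pi * (X / c1 + 8 * R\<^sup>2 / c2))
      \<le> ennreal (xi / pi * (8 * R\<^sup>2 * K powr (2 - 2 * t) / c1 * delta powr (1 + 2 * g - 2 * t * (1 + g))
        + 8 * R\<^sup>2 / c2 * delta))"
    by (intro ennreal_leI) (simp add: mult_ac)
  with E_le_explicit_bound[OF inP a xi d0 t C R I delta mu s dm] show ?thesis
    unfolding X_def s_def c1_def c2_def by (rule order_trans)
qed

lemma eventually_E_le_powr:
  assumes inP: "in_P a rho" and a: "a > 0" and beta: "beta > 0" and feasible: "feasible beta lam"
    and xi: "0 < xi" "xi \<le> a / 2" and d0: "d0 rho > 3 * a / 2"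
    and t: "0 \<le> t" "t \<le> 1" "d0 rho - 3 * a + 2 * a * t > 0"
  shows "\<exists>c c'. \<forall>\<^sub>F delta in at_right 0.
    E a beta lam rho xi delta \<le> ennreal (xi / pi * (c * delta powr (1 + 2 * min 1 beta - 2 * t * (1 + min 1 beta)) + c' * delta))"
proof -
  obtain R where R: "R \<ge> 0" "\<And>k. norm (I_k rho k) \<le> R * exp (- \<bar>k\<bar> * d0 rho)"
    using norm_I_k_le_exp[OF inP] by blast
  have "d0 rho \<ge> 0"
    using d0 a by linarith
  then obtain C where C: "C \<ge> 0" "\<And>k. norm (I_k rho k) \<le> C * \<bar>k\<bar>"
    using norm_I_k_le_abs[OF inP] by blast
  have "\<forall>\<^sub>F delta in at_right 0. E a beta lam rho xi delta \<le> ennreal (xi / pi *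
      (8 * R\<^sup>2 * (2 + \<bar>lam\<bar>) powr (2 - 2 * t) / (d0 rho - 3 * a + 2 * a * t)
        * delta powr (1 + 2 * min 1 beta - 2 * t * (1 + min 1 beta))
      + 8 * R\<^sup>2 / (d0 rho - 3 * a / 2) * delta))"
    using eventually_loss_conditions[OF beta feasible]
    by eventually_elim (intro E_le_powr_bound[OF inP a xi d0 t C(1) R(1) R(2) C(2)]; simp)
  then show ?thesis
    by blast
qed

theorem theorem5p6:
  fixes a beta lam xi :: real and rho :: "real \<Rightarrow> real \<Rightarrow> real"
  assumes "a > 0" and "beta > 0" and "feasible beta lam"
    and "0 < xi" and "xi < a / 2"
    and "in_P a rho"
    and "d0 rho > tau beta * a"
  shows "((\<lambda>delta. E a beta lam rho xi delta) \<longlongrightarrow> 0) (at_right 0)"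
proof -
  define g where "g = min 1 beta"
  obtain t where t: "0 \<le> t" "t \<le> 1" "d0 rho - 3 * a + 2 * a * t > 0" "1 + 2 * g - 2 * t * (1 + g) > 0"
    using exists_interpolation_exponent[OF assms(1,2,7)] unfolding g_def by blast
  have "d0 rho > 3 * a / 2"
    using assms(1,7) mult_right_mono[OF tau_ge_three_halves[OF assms(2)], of a] by linarith
  then obtain c c' where upper: "\<forall>\<^sub>F delta in at_right 0.
      E a beta lam rho xi delta \<le> ennreal (xi / pi * (c * delta powr (1 + 2 * g - 2 * t * (1 + g)) + c' * delta))"
    using eventually_E_le_powr[OF assms(6,1,2,3,4) _ _ t(1-3)] assms(5) unfolding g_def by fastforce
  have "((\<lambda>delta. xi / pi * (c * delta powr (1 + 2 * g - 2 * t * (1 + g)) + c' * delta))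
      \<longlongrightarrow> xi / pi * (c * 0 + c' * 0)) (at_right 0)"
    by (intro tendsto_intros tendsto_powr_at_right_0 t(4) tendsto_ident_at)
  then have "((\<lambda>delta. xi / pi * (c * delta powr (1 + 2 * g - 2 * t * (1 + g)) + c' * delta)) \<longlongrightarrow> 0) (at_right 0)"
    by simp
  from tendsto_ennrealI[OF this] have lim: "((\<lambda>delta.
      ennreal (xi / pi * (c * delta powr (1 + 2 * g - 2 * t * (1 + g)) + c' * delta))) \<longlongrightarrow> 0) (at_right 0)"
    by (simp only: ennreal_0)
  show ?thesis
    by (rule tendsto_sandwich[OF _ upper tendsto_const lim]) simp
qed

end
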